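(* Let $\pi_1,\pi_2,\pi_3$ be Borel probability measures on $[0,\infty)$ such that $\mu=\pi_1\times\pi_2\times\pi_3$ satisfies $R\mu=\mu$, where $R(r,s,t)=(t+[r-s]^+,\,t+[s-r]^+,\,r\wedge s)$. (For example, $\pi_1=\pi_2=\mathrm{Geom}(\lambda)$ and $\pi_3=\mathrm{Geom}(\lambda^2)$ with $\lambda\in(0,1)$, where $\mathrm{Geom}(\lambda)$ is the law $k\mapsto(1-\lambda)\lambda^k$ on $\{0,1,2,\dots\}$.) For a finite hexagonal domain $S$, let $P_S$ denote the law of the flow field $(\eta(e))_{e\in\mathbb{E}(\bar S)}$ generated in $S$ as follows: - the inputs on ascending incoming edges are i.i.d. with law $\pi_1$; - the inputs on descending incoming edges are i.i.d. with law $\pi_2$; - the births $(\xi_y)_{y\in S}$ are i.i.d. with law $\pi_3$; - these three families are mutually independent. Then for any two finite hexagonal domains $S'\subseteq S''$, the law under $P_{S''}$ of the restriction $(\eta(e))_{e\in\mathbb{E}(\bar S')}$ equals $P_{S'}$. Consequently there is a unique probability measure $P$ on $[0,\infty)^{\mathbb{E}(\tilde{\mathbb{Z}}^2)}$ whose restriction to $\mathbb{E}(\bar S)$ is $P_S$ for every finite hexagonal domain $S$, and $P$ is invariant under the translations of $\tilde{\mathbb{Z}}^2$.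
   Context: Lattice and edges. $\tilde{\mathbb{Z}}^2=\{(t,x)\in\mathbb{Z}^2:t+x\text{ even}\}$. Two points of $\tilde{\mathbb{Z}}^2$ at Euclidean distance $\sqrt2$ are joined by an edge $\langle y,y'\rangle$; $\mathbb{E}(\tilde{\mathbb{Z}}^2)$ is the set of all such edges. For $y=(t,x)$ write - $e^\nearrow_y=\langle(t,x),(t+1,x+1)\rangle$, - $e^\searrow_y=\langle(t,x),(t+1,x-1)\rangle$, - $e^\swarrow_y=\langle(t-1,x-1),(t,x)\rangle$, - $e^\nwarrow_y=\langle(t-1,x+1),(t,x)\rangle$. Hexagonal domain. A finite hexagonal domain is a set $S=\{(t,x)\in\tilde{\mathbb{Z}}^2: t_0\le t\le t_1,\ x_{t,-}\le x\le x_{t,+}\}$ where: - $t_0<t_1$ are integers; - $x_{t,-}\le x_{t,+}$ ($t_0\le t\le t_1$) are integers with $t+x_{t,\pm}$ even; - there are $t^\pm_{01}\in[t_0,t_1]$ such that $x_{t+1,\pm}-x_{t,\pm}=\pm1$ for $t_0\le t<t^\pm_{01}$, and $x_{t+1,\pm}-x_{t,\pm}=\mp1$ for $t^\pm_{01}\le t<t_1$. Associated sets. $\bar S=S\cup\{y:\langle y,y'\rangle\in\mathbb{E}(\tilde{\mathbb{Z}}^2)\text{ for some }y'\in S\}$, and $\mathbb{E}(\bar S)$ is the set of edges with at least one endpoint in $S$. An incoming edge of $S$ is an edge $\langle y',y\rangle$ with $y\in S$, $y'\notin S$ and $t(y')=t(y)-1$. It is ascending if it equals $e^\swarrow_y$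 and descending if it equals $e^\nwarrow_y$. Generated flow field. Given nonnegative inputs on the incoming edges and nonnegative births $(\xi_y)_{y\in S}$, define $\eta$ on $\mathbb{E}(\bar S)$ recursively in increasing $t$. For $y\in S$, set $\zeta^+_y=\eta(e^\swarrow_y)$ and $\zeta^-_y=\eta(e^\nwarrow_y)$; each of these is either an input or was already defined at an earlier time. Then set $$\eta(e^\nearrow_y)=\xi_y+[\zeta^+_y-\zeta^-_y]^+,\qquad \eta(e^\searrow_y)=\xi_y+[\zeta^-_y-\zeta^+_y]^+.$$ *)

theory Defs
  imports "HOL-Probability.Probability"
begin

type_synonym pt = "int \<times> int"
type_synonym edge = "pt \<times> pt"   \<comment> \<open>edge stored as (lower endpoint, upper endpoint)\<close>

definition Ztil :: "pt set" where
  "Ztil = {(t, x). even (t + x)}"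

definition Edges :: "edge set" where
  "Edges = {((t, x), (t', x')). even (t + x) \<and> t' = t + 1 \<and> (x' = x + 1 \<or> x' = x - 1)}"

definition hexdom :: "pt set \<Rightarrow> bool" where
  "hexdom S \<longleftrightarrow> (\<exists>(t0::int) t1 (xm::int \<Rightarrow> int) (xp::int \<Rightarrow> int) tm tp.
     t0 < t1 \<and> t0 \<le> tm \<and> tm \<le> t1 \<and> t0 \<le> tp \<and> tp \<le> t1 \<and>
     (\<forall>t. t0 \<le> t \<and> t \<le> t1 \<longrightarrow> xm t \<le> xp t \<and> even (t + xm t) \<and> even (t + xp t)) \<and>
     (\<forall>t. t0 \<le> t \<and> t < tp \<longrightarrow> xp (t + 1) - xp t = 1) \<and>
     (\<forall>t. tp \<le> t \<and> t < t1 \<longrightarrow> xp (t + 1) - xp t = -1) \<and>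
     (\<forall>t. t0 \<le> t \<and> t < tm \<longrightarrow> xm (t + 1) - xm t = -1) \<and>
     (\<forall>t. tm \<le> t \<and> t < t1 \<longrightarrow> xm (t + 1) - xm t = 1) \<and>
     S = {(t, x). even (t + x) \<and> t0 \<le> t \<and> t \<le> t1 \<and> xm t \<le> x \<and> x \<le> xp t})"

definition ES :: "pt set \<Rightarrow> edge set" where
  "ES S = {e \<in> Edges. fst e \<in> S \<or> snd e \<in> S}"

definition in_edges :: "pt set \<Rightarrow> edge set" where
  "in_edges S = {e \<in> Edges. snd e \<in> S \<and> fst e \<notin> S}"

definition ascending :: "edge \<Rightarrow> bool" where
  "ascending e \<longleftrightarrow> snd (fst e) = snd (snd e) - 1"

text \<open>Flow field computed with a recursion depth (fuel): at depth n an edge whose lower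
  endpoint lies in S is computed from the two edges entering that endpoint at depth n-1.\<close>
fun flow_f :: "nat \<Rightarrow> pt set \<Rightarrow> (edge \<Rightarrow> real) \<Rightarrow> (pt \<Rightarrow> real) \<Rightarrow> edge \<Rightarrow> real" where
  "flow_f 0 S inp xi e = inp e"
| "flow_f (Suc n) S inp xi ((t, x), (t', x')) =
     (if (t, x) \<in> S then
        (let zp = flow_f n S inp xi ((t - 1, x - 1), (t, x));
             zm = flow_f n S inp xi ((t - 1, x + 1), (t, x))
         in if x' = x + 1 then xi (t, x) + max (zp - zm) 0 else xi (t, x) + max (zm - zp) 0)
      else inp ((t, x), (t', x')))"

text \<open>The generated flow field: enough fuel to reach back below the earliest time of S.\<close>
definition flow :: "pt set \<Rightarrow> (edge \<Rightarrow> real) \<Rightarrow> (pt \<Rightarrow> real) \<Rightarrow> edge \<Rightarrow> real" where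
  "flow S inp xi e = flow_f (nat (fst (fst e) - Min (fst ` S) + 1)) S inp xi e"

definition nnb :: "real measure" where
  "nnb = restrict_space borel {0..}"

definition R3 :: "real \<times> real \<times> real \<Rightarrow> real \<times> real \<times> real" where
  "R3 = (\<lambda>(r, s, t). (t + max (r - s) 0, t + max (s - r) 0, min r s))"

definition noise :: "real measure \<Rightarrow> real measure \<Rightarrow> real measure \<Rightarrow> pt set \<Rightarrow> (edge + pt \<Rightarrow> real) measure" where
  "noise p1 p2 p3 S = PiM (Inl ` in_edges S \<union> Inr ` S)
     (\<lambda>i. case i of Inl e \<Rightarrow> (if ascending e then p1 else p2) | Inr y \<Rightarrow> p3)"

definition PS :: "real measure \<Rightarrow> real measure \<Rightarrow> real measure \<Rightarrow> pt set \<Rightarrow> (edge \<Rightarrow> real) measure" where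
  "PS p1 p2 p3 S = distr (noise p1 p2 p3 S) (PiM (ES S) (\<lambda>_. nnb))
     (\<lambda>\<omega>. \<lambda>e\<in>ES S. flow S (\<lambda>e. \<omega> (Inl e)) (\<lambda>y. \<omega> (Inr y)) e)"

definition shift_edge :: "pt \<Rightarrow> edge \<Rightarrow> edge" where
  "shift_edge a e = ((fst (fst e) + fst a, snd (fst e) + snd a), (fst (snd e) + fst a, snd (snd e) + snd a))"

end

theory Submission
  imports Defs
begin

(*
  Consistency: remove the sites of S'' - S' one at a time. Hexagonal domains are convex for the
  light-cone order, so a finite T strictly containing a hexagonal S always has a site outside S
  with no successor or no predecessor in T. Removing a site without successors merely forgets
  independent noise. Removing a site y without predecessors makes its two outgoing edges incoming;
  their values are the first two components of R applied to the inputs and birth at y, which are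
  independent of the remaining noise, and R-invariance of pi1 x pi2 x pi3 says that they are
  independent with laws pi1 and pi2, exactly as required for the smaller domain.

  The laws on an exhausting sequence of diamonds then form a projective family, whose Kolmogorov
  limit is the required P; it is unique because the marginals determine it on cylinder sets, and
  it is translation invariant because translating domain and noise commutes with the flow, so a
  translate of P has the same marginals.
*)

section \<open>Hexagonal domains\<close>

lemma constant_increments_eq:
  fixes f :: "int \<Rightarrow> int"
  assumes "\<forall>t. a \<le> t \<and> t < b \<longrightarrow> f (t + 1) - f t = c" and "a \<le> t" "t \<le> b"
  shows "f t = f a + c * (t - a)"
  using assms(2,3)
proof (induction t rule: int_ge_induct)
  case base
  show ?case by simp
next
  case (step i)
  have "f (i + 1) = f i + c" using assms(1) step.hyps step.prems by force
  with step show ?case by (simp add: algebra_simps)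
qed

lemma tent_le_iff:
  fixes f :: "int \<Rightarrow> int"
  assumes "t0 \<le> p" "p \<le> t1"
    and up: "\<forall>t. t0 \<le> t \<and> t < p \<longrightarrow> f (t + 1) - f t = 1"
    and down: "\<forall>t. p \<le> t \<and> t < t1 \<longrightarrow> f (t + 1) - f t = -1"
    and "t0 \<le> t" "t \<le> t1"
  shows "x \<le> f t \<longleftrightarrow> x \<le> f t0 + (t - t0) \<and> x \<le> f t1 + (t1 - t)"
proof -
  have "f p = f t0 + (p - t0)"
    using constant_increments_eq[OF up, of p] assms(1) by simp
  moreover have "f t1 = f p - (t1 - p)"
    using constant_increments_eq[OF down, of t1] assms(2) by simp
  moreover have "t \<le> p \<Longrightarrow> f t = f t0 + (t - t0)"
    using constant_increments_eq[OF up, of t] assms(5) by simp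
  moreover have "p \<le> t \<Longrightarrow> f t = f p - (t - p)"
    using constant_increments_eq[OF down, of t] assms(6) by simp
  ultimately show ?thesis by (cases "t \<le> p") linarith+
qed

definition diag_box :: "int \<Rightarrow> int \<Rightarrow> int \<Rightarrow> int \<Rightarrow> int \<Rightarrow> int \<Rightarrow> pt set" where
  "diag_box t0 t1 A B C D = {(t, x). even (t + x) \<and> t0 \<le> t \<and> t \<le> t1 \<and>
     A \<le> t + x \<and> t + x \<le> B \<and> C \<le> t - x \<and> t - x \<le> D}"

lemma hexdom_diag_box:
  assumes "hexdom S"
  obtains t0 t1 A B C D where "S = diag_box t0 t1 A B C D"
proof -
  from assms obtain t0 t1 xm xp tm tp where
    h: "t0 \<le> tm" "tm \<le> t1" "t0 \<le> tp" "tp \<le> t1"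
     "\<forall>t. t0 \<le> t \<and> t < tp \<longrightarrow> xp (t + 1) - xp t = 1"
     "\<forall>t. tp \<le> t \<and> t < t1 \<longrightarrow> xp (t + 1) - xp t = -1"
     "\<forall>t. t0 \<le> t \<and> t < tm \<longrightarrow> xm (t + 1) - xm t = -1"
     "\<forall>t. tm \<le> t \<and> t < t1 \<longrightarrow> xm (t + 1) - xm t = 1"
     and S: "S = {(t, x). even (t + x) \<and> t0 \<le> t \<and> t \<le> t1 \<and> xm t \<le> x \<and> x \<le> xp t}"
    unfolding hexdom_def by blast
  have xp: "x \<le> xp t \<longleftrightarrow> x \<le> xp t0 + (t - t0) \<and> x \<le> xp t1 + (t1 - t)"
    if "t0 \<le> t" "t \<le> t1" for t x
    by (rule tent_le_iff[of t0 tp t1 xp]) (use h(3-6) that in simp_all)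
  have "\<forall>t. t0 \<le> t \<and> t < tm \<longrightarrow> - xm (t + 1) - - xm t = 1"
    "\<forall>t. tm \<le> t \<and> t < t1 \<longrightarrow> - xm (t + 1) - - xm t = -1"
    using h(7,8) by force+
  then have xm: "- x \<le> - xm t \<longleftrightarrow> - x \<le> - xm t0 + (t - t0) \<and> - x \<le> - xm t1 + (t1 - t)"
    if "t0 \<le> t" "t \<le> t1" for t x
    by (intro tent_le_iff[of t0 tm t1 "\<lambda>t. - xm t"]) (use h(1,2) that in simp_all)
  have iff: "xm t \<le> x \<and> x \<le> xp t \<longleftrightarrow>
      xm t0 + t0 \<le> t + x \<and> t + x \<le> xp t1 + t1 \<and> t0 - xp t0 \<le> t - x \<and> t - x \<le> t1 - xm t1"
    if "t0 \<le> t" "t \<le> t1" for t x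
    using xp[OF that, of x] xm[OF that, of x] by presburger
  have "S = diag_box t0 t1 (xm t0 + t0) (xp t1 + t1) (t0 - xp t0) (t1 - xm t1)"
  proof (rule set_eqI)
    fix z :: pt
    obtain t x where z: "z = (t, x)" by fastforce
    show "z \<in> S \<longleftrightarrow> z \<in> diag_box t0 t1 (xm t0 + t0) (xp t1 + t1) (t0 - xp t0) (t1 - xm t1)"
      unfolding z S diag_box_def using iff[of t x] by auto
  qed
  then show thesis by (rule that)
qed

definition cone_le :: "pt \<Rightarrow> pt \<Rightarrow> bool" where
  "cone_le y w \<longleftrightarrow> fst y + snd y \<le> fst w + snd w \<and> fst y - snd y \<le> fst w - snd w"

lemma cone_le_trans: "cone_le a b \<Longrightarrow> cone_le b c \<Longrightarrow> cone_le a c"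
  unfolding cone_le_def by linarith

lemma hexdom_cone_convex:
  assumes "hexdom S" "z \<in> S" "w \<in> S" "y \<in> Ztil" "cone_le z y" "cone_le y w"
  shows "y \<in> S"
proof -
  obtain t0 t1 A B C D where S: "S = diag_box t0 t1 A B C D"
    using hexdom_diag_box[OF assms(1)] .
  obtain ty xy tz xz tw xw where pts: "y = (ty, xy)" "z = (tz, xz)" "w = (tw, xw)"
    by (metis prod.collapse)
  have "even (ty + xy)" using assms(4) unfolding pts Ztil_def by simp
  moreover have "t0 \<le> tz" "A \<le> tz + xz" "C \<le> tz - xz" "tw \<le> t1" "tw + xw \<le> B" "tw - xw \<le> D"
    using assms(2,3) unfolding S pts diag_box_def by simp_all
  moreover have "tz + xz \<le> ty + xy" "tz - xz \<le> ty - xy" "ty + xy \<le> tw + xw" "ty - xy \<le> tw - xw"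
    using assms(5,6) unfolding pts cone_le_def by simp_all
  ultimately show ?thesis
    unfolding S pts diag_box_def by (simp only: mem_Collect_eq case_prod_conv) (intro conjI TrueI; linarith)
qed

lemma hexdom_finite: "hexdom S \<Longrightarrow> finite S"
proof -
  assume "hexdom S"
  then obtain t0 t1 A B C D where S: "S = diag_box t0 t1 A B C D"
    by (rule hexdom_diag_box)
  have "S \<subseteq> {t0..t1} \<times> {A - t1 .. B - t0}"
    unfolding S diag_box_def by auto
  then show ?thesis by (rule finite_subset) simp
qed

lemma hexdom_subset_Ztil: "hexdom S \<Longrightarrow> S \<subseteq> Ztil"
  unfolding hexdom_def Ztil_def by auto

definition diamond :: "nat \<Rightarrow> pt set" where
  "diamond m = {(t, x). even (t + x) \<and> \<bar>t\<bar> + \<bar>x\<bar> \<le> 2 * int m + 2}"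

lemma diamond_mono: "m \<le> n \<Longrightarrow> diamond m \<subseteq> diamond n"
  unfolding diamond_def by auto

lemma diamond_eq:
  "diamond m = {(t, x). even (t + x) \<and> - (2 * int m + 2) \<le> t \<and> t \<le> 2 * int m + 2 \<and>
     \<bar>t\<bar> - (2 * int m + 2) \<le> x \<and> x \<le> (2 * int m + 2) - \<bar>t\<bar>}"
proof (rule set_eqI)
  fix z :: pt
  obtain t x where z: "z = (t, x)" by fastforce
  have "\<bar>t\<bar> + \<bar>x\<bar> \<le> R \<longleftrightarrow> - R \<le> t \<and> t \<le> R \<and> \<bar>t\<bar> - R \<le> x \<and> x \<le> R - \<bar>t\<bar>" for R
    by (cases "t \<ge> 0"; cases "x \<ge> 0") auto
  then show "z \<in> diamond m \<longleftrightarrow> z \<in> {(t, x). even (t + x) \<and> - (2 * int m + 2) \<le> t \<and>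
      t \<le> 2 * int m + 2 \<and> \<bar>t\<bar> - (2 * int m + 2) \<le> x \<and> x \<le> (2 * int m + 2) - \<bar>t\<bar>}"
    unfolding z diamond_def by simp
qed

lemma hexdom_diamond: "hexdom (diamond m)"
proof -
  define R where "R = 2 * int m + 2"
  have R: "R > 0" "even R" unfolding R_def by simp_all
  have "even (t + (\<bar>t\<bar> - R)) \<and> even (t + (R - \<bar>t\<bar>))" for t
  proof (cases "t \<ge> 0")
    case True
    then have "t + (\<bar>t\<bar> - R) = 2 * t - R" "t + (R - \<bar>t\<bar>) = R" by simp_all
    then show ?thesis using R(2) by simp
  next
    case False
    then have "t + (\<bar>t\<bar> - R) = - R" "t + (R - \<bar>t\<bar>) = R + 2 * t" by simp_all
    then show ?thesis using R(2) by simp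
  qed
  then have "\<forall>t. - R \<le> t \<and> t \<le> R \<longrightarrow>
      \<bar>t\<bar> - R \<le> R - \<bar>t\<bar> \<and> even (t + (\<bar>t\<bar> - R)) \<and> even (t + (R - \<bar>t\<bar>))"
    by auto
  moreover have "\<forall>t. - R \<le> t \<and> t < 0 \<longrightarrow> (R - \<bar>t + 1\<bar>) - (R - \<bar>t\<bar>) = 1"
    "\<forall>t. 0 \<le> t \<and> t < R \<longrightarrow> (R - \<bar>t + 1\<bar>) - (R - \<bar>t\<bar>) = -1"
    "\<forall>t. - R \<le> t \<and> t < 0 \<longrightarrow> (\<bar>t + 1\<bar> - R) - (\<bar>t\<bar> - R) = -1"
    "\<forall>t. 0 \<le> t \<and> t < R \<longrightarrow> (\<bar>t + 1\<bar> - R) - (\<bar>t\<bar> - R) = 1"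
    by auto
  ultimately show ?thesis
    unfolding hexdom_def diamond_eq R_def[symmetric] using R(1)
    by (intro exI[of _ "-R"] exI[of _ R] exI[of _ "\<lambda>t. \<bar>t\<bar> - R"] exI[of _ "\<lambda>t. R - \<bar>t\<bar>"]
        exI[of _ 0]) simp
qed

lemma ex_diamond_superset:
  assumes "finite S" "S \<subseteq> Ztil"
  shows "\<exists>m. S \<subseteq> diamond m"
proof -
  define M where "M = Max ((\<lambda>y. \<bar>fst y\<bar> + \<bar>snd y\<bar>) ` S \<union> {0})"
  have "\<bar>fst y\<bar> + \<bar>snd y\<bar> \<le> M" if "y \<in> S" for y
    unfolding M_def using assms(1) that by auto
  then have "S \<subseteq> diamond (nat M)"
    using assms(2) unfolding diamond_def Ztil_def by fastforce
  then show ?thesis ..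
qed

lemma ex_diamond_ES_superset:
  assumes "finite J" "J \<subseteq> Edges"
  shows "\<exists>m. J \<subseteq> ES (diamond m)"
proof -
  have "fst ` J \<subseteq> Ztil"
    using assms(2) unfolding Edges_def Ztil_def by auto
  then obtain m where "fst ` J \<subseteq> diamond m"
    using ex_diamond_superset assms(1) by blast
  then have "J \<subseteq> ES (diamond m)"
    using assms(2) unfolding ES_def by auto
  then show ?thesis ..
qed

lemma shift_edge_eq: "shift_edge a e = (fst e + a, snd e + a)"
  unfolding shift_edge_def by (simp add: prod_eq_iff)

lemma shifted_increments:
  fixes f :: "int \<Rightarrow> int"
  assumes "\<forall>t. a \<le> t \<and> t < b \<longrightarrow> f (t + 1) - f t = c"
  shows "\<forall>t. a + s \<le> t \<and> t < b + s \<longrightarrow> (f (t + 1 - s) + d) - (f (t - s) + d) = c"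
proof (intro allI impI)
  fix t assume "a + s \<le> t \<and> t < b + s"
  then have "f (t - s + 1) - f (t - s) = c" using assms by simp
  then show "(f (t + 1 - s) + d) - (f (t - s) + d) = c" by (simp add: algebra_simps)
qed

lemma shift_image_eq:
  fixes a1 a2 :: int and xm xp :: "int \<Rightarrow> int"
  assumes "even (a1 + a2)"
  shows "(\<lambda>y. y + (a1, a2)) ` {(t, x). even (t + x) \<and> t0 \<le> t \<and> t \<le> t1 \<and> xm t \<le> x \<and> x \<le> xp t}
       = {(t, x). even (t + x) \<and> t0 + a1 \<le> t \<and> t \<le> t1 + a1 \<and>
           xm (t - a1) + a2 \<le> x \<and> x \<le> xp (t - a1) + a2}" (is "_ ` ?S = ?S'")
proof (intro set_eqI iffI)
  fix z assume "z \<in> (\<lambda>y. y + (a1, a2)) ` ?S"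
  then obtain t x where tx: "(t, x) \<in> ?S" "z = (t + a1, x + a2)" by auto
  then have "even (t + a1 + (x + a2))" using assms by auto
  then show "z \<in> ?S'" using tx by auto
next
  fix z assume "z \<in> ?S'"
  then obtain t x where tx: "z = (t, x)" "(t, x) \<in> ?S'" by (cases z) auto
  then have "even (t - a1 + (x - a2))" using assms by auto
  then have "(t - a1, x - a2) \<in> ?S" using tx by auto
  moreover have "z = (t - a1, x - a2) + (a1, a2)" unfolding tx by simp
  ultimately show "z \<in> (\<lambda>y. y + (a1, a2)) ` ?S" by blast
qed

lemma hexdom_shift:
  assumes "hexdom S" "a \<in> Ztil"
  shows "hexdom ((\<lambda>y. y + a) ` S)"
proof -
  obtain a1 a2 where a: "a = (a1, a2)" "even (a1 + a2)"
    using assms(2) unfolding Ztil_def by auto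
  from assms(1) obtain t0 t1 xm xp tm tp where
    h: "t0 < t1" "t0 \<le> tm" "tm \<le> t1" "t0 \<le> tp" "tp \<le> t1"
     "\<forall>t. t0 \<le> t \<and> t \<le> t1 \<longrightarrow> xm t \<le> xp t \<and> even (t + xm t) \<and> even (t + xp t)"
     "\<forall>t. t0 \<le> t \<and> t < tp \<longrightarrow> xp (t + 1) - xp t = 1"
     "\<forall>t. tp \<le> t \<and> t < t1 \<longrightarrow> xp (t + 1) - xp t = -1"
     "\<forall>t. t0 \<le> t \<and> t < tm \<longrightarrow> xm (t + 1) - xm t = -1"
     "\<forall>t. tm \<le> t \<and> t < t1 \<longrightarrow> xm (t + 1) - xm t = 1"
     and S: "S = {(t, x). even (t + x) \<and> t0 \<le> t \<and> t \<le> t1 \<and> xm t \<le> x \<and> x \<le> xp t}"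
    unfolding hexdom_def by blast
  have bounds: "\<forall>t. t0 + a1 \<le> t \<and> t \<le> t1 + a1 \<longrightarrow> xm (t - a1) + a2 \<le> xp (t - a1) + a2 \<and>
      even (t + (xm (t - a1) + a2)) \<and> even (t + (xp (t - a1) + a2))"
  proof (intro allI impI)
    fix t assume "t0 + a1 \<le> t \<and> t \<le> t1 + a1"
    then have "t0 \<le> t - a1 \<and> t - a1 \<le> t1" by simp
    then have "xm (t - a1) \<le> xp (t - a1) \<and> even (t - a1 + xm (t - a1)) \<and> even (t - a1 + xp (t - a1))"
      using h(6) by blast
    then show "xm (t - a1) + a2 \<le> xp (t - a1) + a2 \<and>
      even (t + (xm (t - a1) + a2)) \<and> even (t + (xp (t - a1) + a2))"
      using a(2) by presburger
  qed
  show ?thesis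
    unfolding hexdom_def
  proof (intro exI conjI)
    show "t0 + a1 < t1 + a1" "t0 + a1 \<le> tm + a1" "tm + a1 \<le> t1 + a1" "t0 + a1 \<le> tp + a1"
      "tp + a1 \<le> t1 + a1"
      using h(1-5) by simp_all
    show "\<forall>t. t0 + a1 \<le> t \<and> t < tp + a1 \<longrightarrow> xp (t + 1 - a1) + a2 - (xp (t - a1) + a2) = 1"
      by (rule shifted_increments[OF h(7)])
    show "\<forall>t. tp + a1 \<le> t \<and> t < t1 + a1 \<longrightarrow> xp (t + 1 - a1) + a2 - (xp (t - a1) + a2) = -1"
      by (rule shifted_increments[OF h(8)])
    show "\<forall>t. t0 + a1 \<le> t \<and> t < tm + a1 \<longrightarrow> xm (t + 1 - a1) + a2 - (xm (t - a1) + a2) = -1"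
      by (rule shifted_increments[OF h(9)])
    show "\<forall>t. tm + a1 \<le> t \<and> t < t1 + a1 \<longrightarrow> xm (t + 1 - a1) + a2 - (xm (t - a1) + a2) = 1"
      by (rule shifted_increments[OF h(10)])
  qed (fact bounds, unfold S a(1), rule shift_image_eq[OF a(2)])
qed

definition no_succ_in :: "pt set \<Rightarrow> pt \<Rightarrow> bool" where
  "no_succ_in T y \<longleftrightarrow> (fst y + 1, snd y + 1) \<notin> T \<and> (fst y + 1, snd y - 1) \<notin> T"

definition no_pred_in :: "pt set \<Rightarrow> pt \<Rightarrow> bool" where
  "no_pred_in T y \<longleftrightarrow> (fst y - 1, snd y - 1) \<notin> T \<and> (fst y - 1, snd y + 1) \<notin> T"

lemma cone_le_path_up:
  assumes "finite T" "w \<in> T" and succ: "\<And>w. w \<in> T - S \<Longrightarrow> \<not> no_succ_in T w"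
  shows "\<exists>w'\<in>S. cone_le w w'"
  using assms(2)
proof (induction "nat (Max (fst ` T) - fst w)" arbitrary: w rule: less_induct)
  case less
  show ?case
  proof (cases "w \<in> S")
    case True
    then show ?thesis unfolding cone_le_def by blast
  next
    case False
    then obtain w1 where w1: "w1 \<in> T" "w1 = (fst w + 1, snd w + 1) \<or> w1 = (fst w + 1, snd w - 1)"
      using succ[of w] less.prems False unfolding no_succ_in_def by blast
    have "fst w1 \<le> Max (fst ` T)" using w1(1) assms(1) by simp
    then have "nat (Max (fst ` T) - fst w1) < nat (Max (fst ` T) - fst w)" using w1(2) by auto
    then obtain w' where w': "w' \<in> S" "cone_le w1 w'"
      using less.hyps w1(1) by blast
    have "cone_le w w1" using w1(2) unfolding cone_le_def by auto
    then show ?thesis using cone_le_trans[OF _ w'(2)] w'(1) by blast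
  qed
qed

text \<open>An earliest site of T - S has a predecessor in T, hence in S, and following successors it
  reaches S; convexity would put it into S.\<close>
lemma hexdom_peel:
  assumes S: "hexdom S" and T: "finite T" "T \<subseteq> Ztil" "T - S \<noteq> {}"
  shows "\<exists>y\<in>T - S. no_succ_in T y \<or> no_pred_in T y"
proof (rule ccontr)
  assume "\<not> ?thesis"
  then have extreme: "\<And>y. y \<in> T - S \<Longrightarrow> \<not> no_succ_in T y \<and> \<not> no_pred_in T y" by blast
  have fin: "finite (fst ` (T - S))" and ne: "fst ` (T - S) \<noteq> {}"
    using T(1,3) by auto
  obtain y0 where y0: "y0 \<in> T - S" "fst y0 = Min (fst ` (T - S))"
    using Min_in[OF fin ne] by (metis imageE)
  have y0_min: "fst y0 \<le> fst z" if "z \<in> T - S" for z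
    unfolding y0(2) using Min_le[OF fin] that by blast
  obtain z where z: "z \<in> T" "z = (fst y0 - 1, snd y0 - 1) \<or> z = (fst y0 - 1, snd y0 + 1)"
    using extreme[OF y0(1)] unfolding no_pred_in_def by auto
  have "z \<in> S"
  proof (rule ccontr)
    assume "z \<notin> S"
    then have "fst y0 \<le> fst z" using y0_min z(1) by blast
    then show False using z(2) by auto
  qed
  moreover have "\<exists>w'\<in>S. cone_le y0 w'"
    by (rule cone_le_path_up[OF T(1)]) (use y0(1) extreme in auto)
  moreover have "cone_le z y0" using z(2) unfolding cone_le_def by auto
  moreover have "y0 \<in> Ztil" using y0(1) T(2) by auto
  ultimately have "y0 \<in> S" using hexdom_cone_convex[OF S] by blast
  then show False using y0(1) by simp
qed

section \<open>The flow recursion\<close>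

definition sw_edge :: "pt \<Rightarrow> edge" where
  "sw_edge y = ((fst y - 1, snd y - 1), y)"

definition nw_edge :: "pt \<Rightarrow> edge" where
  "nw_edge y = ((fst y - 1, snd y + 1), y)"

definition node_out :: "real \<Rightarrow> real \<Rightarrow> real \<Rightarrow> edge \<Rightarrow> real" where
  "node_out b zp zm e =
     b + (if snd (snd e) = snd (fst e) + 1 then max (zp - zm) 0 else max (zm - zp) 0)"

definition flow_rhs :: "pt set \<Rightarrow> (edge \<Rightarrow> real) \<Rightarrow> (pt \<Rightarrow> real) \<Rightarrow> (edge \<Rightarrow> real) \<Rightarrow> edge \<Rightarrow> real" where
  "flow_rhs S inp xi g e =
     (if fst e \<in> S then node_out (xi (fst e)) (g (sw_edge (fst e))) (g (nw_edge (fst e))) e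
      else inp e)"

lemma Min_fst_le: "finite S \<Longrightarrow> y \<in> S \<Longrightarrow> Min (fst ` S) \<le> fst y"
  by simp

lemma flow_f_fuel_irrelevant:
  assumes "finite S"
  shows "nat (fst (fst e) - Min (fst ` S) + 1) \<le> n \<Longrightarrow> nat (fst (fst e) - Min (fst ` S) + 1) \<le> k \<Longrightarrow>
    flow_f n S inp xi e = flow_f k S inp xi e"
proof (induction n arbitrary: e k)
  case 0
  obtain t x t' x' where e: "e = ((t, x), (t', x'))" by (metis prod.collapse)
  have "(t, x) \<notin> S" using 0 Min_fst_le[OF assms, of "(t, x)"] e by auto
  then show ?case using e by (cases k) auto
next
  case (Suc n)
  obtain t x t' x' where e: "e = ((t, x), (t', x'))" by (metis prod.collapse)
  show ?case
  proof (cases "(t, x) \<in> S")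
    case False
    then show ?thesis using e by (cases k) auto
  next
    case True
    then have "Min (fst ` S) \<le> t" using Min_fst_le[OF assms] by force
    then obtain k' where k: "k = Suc k'" using Suc.prems e by (cases k) auto
    have "flow_f n S inp xi ((t - 1, x''), (t, x)) = flow_f k' S inp xi ((t - 1, x''), (t, x))"
      for x''
      using Suc.prems e \<open>Min (fst ` S) \<le> t\<close> unfolding k by (intro Suc.IH) auto
    then show ?thesis unfolding e k using True by (simp add: Let_def)
  qed
qed

lemma flow_eqn:
  assumes "finite S"
  shows "flow S inp xi e = flow_rhs S inp xi (flow S inp xi) e"
proof -
  obtain t x t' x' where e: "e = ((t, x), (t', x'))" by (metis prod.collapse)
  show ?thesis
  proof (cases "(t, x) \<in> S")
    case True
    then have "Min (fst ` S) \<le> t" using Min_fst_le[OF assms] by force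
    then have fuel: "nat (t - Min (fst ` S) + 1) = Suc (nat (t - Min (fst ` S)))" by simp
    have "flow_f (nat (t - Min (fst ` S))) S inp xi ((t - 1, x''), (t, x))
        = flow S inp xi ((t - 1, x''), (t, x))" for x''
      unfolding flow_def by (rule flow_f_fuel_irrelevant[OF assms]) auto
    then show ?thesis
      unfolding e flow_rhs_def node_out_def sw_edge_def nw_edge_def
      using True by (simp add: flow_def fuel Let_def)
  next
    case False
    then show ?thesis
      unfolding e flow_def flow_rhs_def by (cases "nat (t - Min (fst ` S) + 1)") auto
  qed
qed

lemma sw_edge_ES: "y \<in> S \<Longrightarrow> S \<subseteq> Ztil \<Longrightarrow> sw_edge y \<in> ES S"
  unfolding sw_edge_def ES_def Edges_def Ztil_def by (cases y) auto

lemma nw_edge_ES: "y \<in> S \<Longrightarrow> S \<subseteq> Ztil \<Longrightarrow> nw_edge y \<in> ES S"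
  unfolding nw_edge_def ES_def Edges_def Ztil_def by (cases y) auto

lemma flow_induct [consumes 3, case_names edge]:
  assumes "finite S" "S \<subseteq> Ztil" "e \<in> ES S"
    and step: "\<And>e. e \<in> ES S \<Longrightarrow> (fst e \<in> S \<Longrightarrow> P (sw_edge (fst e)) \<and> P (nw_edge (fst e))) \<Longrightarrow> P e"
  shows "P e"
  using assms(3)
proof (induction "nat (fst (fst e) - Min (fst ` S) + 1)" arbitrary: e rule: less_induct)
  case less
  show ?case
  proof (rule step[OF less.prems])
    assume S: "fst e \<in> S"
    then have "Min (fst ` S) \<le> fst (fst e)" using Min_fst_le[OF assms(1)] by blast
    then show "P (sw_edge (fst e)) \<and> P (nw_edge (fst e))"
      using less.hyps sw_edge_ES[OF S assms(2)] nw_edge_ES[OF S assms(2)]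
      by (auto simp: sw_edge_def nw_edge_def)
  qed
qed

lemma flow_unique:
  assumes "finite S" "S \<subseteq> Ztil" "e \<in> ES S"
    and rec: "\<And>e. e \<in> ES S \<Longrightarrow> g e = flow_rhs S inp xi g e"
  shows "g e = flow S inp xi e"
  using assms(1-3)
proof (induction rule: flow_induct)
  case (edge e)
  then have "flow_rhs S inp xi g e = flow_rhs S inp xi (flow S inp xi) e"
    by (simp add: flow_rhs_def)
  then show ?case using rec[OF edge(1)] flow_eqn[OF assms(1)] by simp
qed

lemma ES_in_edges: "e \<in> ES S \<Longrightarrow> fst e \<notin> S \<Longrightarrow> e \<in> in_edges S"
  unfolding ES_def in_edges_def by auto

lemma flow_rhs_cong:
  assumes "e \<in> ES S" "\<And>e. e \<in> in_edges S \<Longrightarrow> inp e = inp' e" "\<And>y. y \<in> S \<Longrightarrow> xi y = xi' y"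
  shows "flow_rhs S inp xi g e = flow_rhs S inp' xi' g e"
  using assms ES_in_edges[OF assms(1)] unfolding flow_rhs_def by auto

lemma flow_cong:
  assumes "finite S" "S \<subseteq> Ztil" "e \<in> ES S"
    and "\<And>e. e \<in> in_edges S \<Longrightarrow> inp e = inp' e" "\<And>y. y \<in> S \<Longrightarrow> xi y = xi' y"
  shows "flow S inp xi e = flow S inp' xi' e"
proof (rule flow_unique[OF assms(1-3), symmetric])
  fix e assume "e \<in> ES S"
  then show "flow S inp' xi' e = flow_rhs S inp xi (flow S inp' xi') e"
    using flow_eqn[OF assms(1)] flow_rhs_cong[of e S inp inp' xi xi'] assms(4,5) by metis
qed

lemma flow_nonneg:
  assumes "finite S" "S \<subseteq> Ztil" "e \<in> ES S"
    and "\<And>e. e \<in> in_edges S \<Longrightarrow> inp e \<ge> 0" "\<And>y. y \<in> S \<Longrightarrow> xi y \<ge> 0"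
  shows "flow S inp xi e \<ge> 0"
  using assms(1-3)
proof (induction rule: flow_induct)
  case (edge e)
  then show ?case
    using flow_eqn[OF assms(1), of inp xi e] assms(4,5) ES_in_edges[OF edge(1)]
    by (auto simp: flow_rhs_def node_out_def)
qed

lemma fst_shift_edge: "fst (shift_edge a e) = fst e + a"
  unfolding shift_edge_eq by simp

lemma node_out_shift: "node_out b zp zm (shift_edge a e) = node_out b zp zm e"
  unfolding node_out_def shift_edge_def by simp

lemma sw_nw_edge_shift:
  "sw_edge (y + a) = shift_edge a (sw_edge y)" "nw_edge (y + a) = shift_edge a (nw_edge y)"
  unfolding sw_edge_def nw_edge_def shift_edge_eq by (simp_all add: prod_eq_iff)

lemma flow_shift:
  assumes "finite S" "S \<subseteq> Ztil" "e \<in> ES S"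
  shows "flow ((\<lambda>y. y + a) ` S) inp xi (shift_edge a e)
       = flow S (\<lambda>e. inp (shift_edge a e)) (\<lambda>y. xi (y + a)) e"
proof (rule flow_unique[OF assms])
  fix e :: edge
  have "fst e + a \<in> (\<lambda>y. y + a) ` S \<longleftrightarrow> fst e \<in> S" by auto
  then show "flow ((\<lambda>y. y + a) ` S) inp xi (shift_edge a e)
      = flow_rhs S (\<lambda>e. inp (shift_edge a e)) (\<lambda>y. xi (y + a))
          (\<lambda>e. flow ((\<lambda>y. y + a) ` S) inp xi (shift_edge a e)) e"
    using flow_eqn[of "(\<lambda>y. y + a) ` S" inp xi "shift_edge a e"] assms(1)
    by (simp add: flow_rhs_def node_out_shift sw_nw_edge_shift fst_shift_edge)
qed

section \<open>Removing one site\<close>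

definition ne_edge :: "pt \<Rightarrow> edge" where
  "ne_edge y = (y, (fst y + 1, snd y + 1))"

definition se_edge :: "pt \<Rightarrow> edge" where
  "se_edge y = (y, (fst y + 1, snd y - 1))"

lemma Edges_out_cases:
  assumes "e \<in> Edges"
  shows "e = ne_edge (fst e) \<or> e = se_edge (fst e)"
  using assms unfolding Edges_def ne_edge_def se_edge_def by auto

lemma no_succ_in_mono: "no_succ_in T y \<Longrightarrow> T' \<subseteq> T \<Longrightarrow> no_succ_in T' y"
  unfolding no_succ_in_def by auto

lemma no_pred_in_mono: "no_pred_in T y \<Longrightarrow> T' \<subseteq> T \<Longrightarrow> no_pred_in T' y"
  unfolding no_pred_in_def by auto

lemma in_edges_from_no_succ:
  assumes "e \<in> in_edges T" "no_succ_in T y"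
  shows "fst e \<noteq> y"
proof
  assume "fst e = y"
  moreover have "e \<in> Edges" "snd e \<in> T" using assms(1) unfolding in_edges_def by auto
  moreover have "snd e = snd (ne_edge (fst e)) \<or> snd e = snd (se_edge (fst e))"
    using Edges_out_cases[OF \<open>e \<in> Edges\<close>] by (metis)
  ultimately show False
    using assms(2) unfolding no_succ_in_def ne_edge_def se_edge_def by auto
qed

lemma in_edges_insert_no_pred:
  assumes "no_pred_in T y" "y \<notin> T" "y \<in> Ztil"
  shows "in_edges (insert y T) = {e \<in> in_edges T. fst e \<noteq> y} \<union> {sw_edge y, nw_edge y}"
proof (intro set_eqI iffI)
  fix e assume e: "e \<in> in_edges (insert y T)"
  show "e \<in> {e \<in> in_edges T. fst e \<noteq> y} \<union> {sw_edge y, nw_edge y}"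
  proof (cases "snd e = y")
    case True
    then show ?thesis using e unfolding in_edges_def Edges_def sw_edge_def nw_edge_def by auto
  next
    case False
    then show ?thesis using e unfolding in_edges_def by auto
  qed
next
  fix e assume e: "e \<in> {e \<in> in_edges T. fst e \<noteq> y} \<union> {sw_edge y, nw_edge y}"
  have "sw_edge y \<in> Edges" "nw_edge y \<in> Edges"
    using assms(3) unfolding sw_edge_def nw_edge_def Edges_def Ztil_def by (cases y; auto)+
  then show "e \<in> in_edges (insert y T)"
    using e assms(1,2) unfolding in_edges_def no_pred_in_def sw_edge_def nw_edge_def
    by (cases y) auto
qed

lemma finite_in_edges: "finite T \<Longrightarrow> finite (in_edges T)"
proof -
  assume "finite T"
  have "in_edges T \<subseteq> (\<lambda>(y, k). ((fst y - 1, snd y + k), y)) ` (T \<times> {-1, 1})"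
    unfolding in_edges_def Edges_def by (force simp: image_iff)
  then show ?thesis using \<open>finite T\<close> finite_subset by blast
qed

lemma finite_ES: "finite T \<Longrightarrow> finite (ES T)"
proof -
  assume "finite T"
  have "ES T \<subseteq> (\<lambda>(y, k). ((fst y - 1, snd y + k), y)) ` (T \<times> {-1, 1}) \<union>
      (\<lambda>(y, k). (y, (fst y + 1, snd y + k))) ` (T \<times> {-1, 1})"
    unfolding ES_def Edges_def by (force simp: image_iff)
  then show ?thesis using \<open>finite T\<close> finite_subset by blast
qed

lemma ES_mono: "T \<subseteq> T' \<Longrightarrow> ES T \<subseteq> ES T'"
  unfolding ES_def by auto

lemma ES_subset_Edges: "ES S \<subseteq> Edges"
  unfolding ES_def by auto

definition noise_index :: "pt set \<Rightarrow> (edge + pt) set" where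
  "noise_index S = Inl ` in_edges S \<union> Inr ` S"

definition noise_law :: "real measure \<Rightarrow> real measure \<Rightarrow> real measure \<Rightarrow> edge + pt \<Rightarrow> real measure" where
  "noise_law p1 p2 p3 i = (case i of Inl e \<Rightarrow> if ascending e then p1 else p2 | Inr y \<Rightarrow> p3)"

lemma noise_eq: "noise p1 p2 p3 S = PiM (noise_index S) (noise_law p1 p2 p3)"
  unfolding noise_def noise_index_def noise_law_def ..

lemma finite_noise_index: "finite T \<Longrightarrow> finite (noise_index T)"
  unfolding noise_index_def using finite_in_edges by auto

definition flow_map :: "pt set \<Rightarrow> (edge + pt \<Rightarrow> real) \<Rightarrow> edge \<Rightarrow> real" where
  "flow_map S \<omega> = (\<lambda>e\<in>ES S. flow S (\<lambda>e. \<omega> (Inl e)) (\<lambda>y. \<omega> (Inr y)) e)"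

lemma PS_eq: "PS p1 p2 p3 S = distr (noise p1 p2 p3 S) (PiM (ES S) (\<lambda>_. nnb)) (flow_map S)"
  unfolding PS_def flow_map_def ..

definition emitted :: "pt \<Rightarrow> (edge + pt \<Rightarrow> real) \<Rightarrow> edge \<Rightarrow> real" where
  "emitted y \<omega> e = node_out (\<omega> (Inr y)) (\<omega> (Inl (sw_edge y))) (\<omega> (Inl (nw_edge y))) e"

text \<open>Noise of T read off from noise of insert y T once y is removed: the inputs on the
  edges leaving y become the values that y emits.\<close>
definition collapse_noise :: "pt set \<Rightarrow> pt \<Rightarrow> (edge + pt \<Rightarrow> real) \<Rightarrow> edge + pt \<Rightarrow> real" where
  "collapse_noise T y \<omega> = (\<lambda>i\<in>noise_index T.
     case i of Inl e \<Rightarrow> if fst e = y then emitted y \<omega> e else \<omega> i | Inr z \<Rightarrow> \<omega> i)"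

lemma flow_map_insert:
  assumes T: "finite T" "T \<subseteq> Ztil" and y: "y \<in> Ztil" "y \<notin> T"
    and extreme: "no_succ_in T y \<or> no_pred_in T y"
  shows "restrict (flow_map (insert y T) \<omega>) (ES T) = flow_map T (collapse_noise T y \<omega>)"
proof -
  let ?T' = "insert y T" and ?g = "flow (insert y T) (\<lambda>e. \<omega> (Inl e)) (\<lambda>z. \<omega> (Inr z))"
  let ?\<omega>' = "collapse_noise T y \<omega>"
  have T': "finite ?T'" using T(1) by simp
  have rec: "?g e = flow_rhs T (\<lambda>e. ?\<omega>' (Inl e)) (\<lambda>z. ?\<omega>' (Inr z)) ?g e" if e: "e \<in> ES T" for e
  proof (cases "fst e \<in> T")
    case True
    then have "Inr (fst e) \<in> noise_index T" unfolding noise_index_def by simp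
    then show ?thesis
      using flow_eqn[OF T', of _ _ e] True by (simp add: flow_rhs_def collapse_noise_def)
  next
    case False
    then have in_e: "e \<in> in_edges T" by (rule ES_in_edges[OF e])
    then have idx: "Inl e \<in> noise_index T" unfolding noise_index_def by simp
    show ?thesis
    proof (cases "fst e = y")
      case True
      then have "no_pred_in T y" using extreme in_edges_from_no_succ[OF in_e] by blast
      then have "fst (sw_edge y) \<notin> ?T'" "fst (nw_edge y) \<notin> ?T'"
        using y(2) unfolding no_pred_in_def sw_edge_def nw_edge_def by (auto simp: prod_eq_iff)
      then have "?g (sw_edge y) = \<omega> (Inl (sw_edge y))" "?g (nw_edge y) = \<omega> (Inl (nw_edge y))"
        using flow_eqn[OF T', of _ _ "sw_edge y"] flow_eqn[OF T', of _ _ "nw_edge y"]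
        by (simp_all add: flow_rhs_def)
      then show ?thesis
        using flow_eqn[OF T', of _ _ e] True False idx
        by (simp add: flow_rhs_def collapse_noise_def emitted_def)
    next
      case other: False
      then show ?thesis
        using flow_eqn[OF T', of _ _ e] False idx by (simp add: flow_rhs_def collapse_noise_def)
    qed
  qed
  have "?g e = flow T (\<lambda>e. ?\<omega>' (Inl e)) (\<lambda>z. ?\<omega>' (Inr z)) e" if "e \<in> ES T" for e
    using flow_unique[OF T that] rec by blast
  then show ?thesis
    using ES_mono[of T ?T'] unfolding flow_map_def by (auto simp: fun_eq_iff)
qed

section \<open>Measurability of the flow\<close>

lemma space_nnb: "space nnb = {0..}"
  unfolding nnb_def by (simp add: space_restrict_space)

lemma measurable_nnb_iff: "f \<in> measurable M nnb \<longleftrightarrow> f \<in> borel_measurable M \<and> f \<in> space M \<rightarrow> {0..}"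
  unfolding nnb_def measurable_restrict_space2_iff ..

lemma measurable_nnb_imp_borel:
  assumes "sets N = sets nnb" "f \<in> measurable M N"
  shows "f \<in> borel_measurable M"
proof -
  have "measurable M N = measurable M nnb" by (rule measurable_cong_sets[OF refl assms(1)])
  then have "f \<in> measurable M nnb" using assms(2) by simp
  then show ?thesis by (simp add: measurable_nnb_iff)
qed

lemma measurable_nnb_nonnegI:
  assumes "sets N = sets nnb" "f \<in> borel_measurable M" "\<And>x. x \<in> space M \<Longrightarrow> f x \<ge> 0"
  shows "f \<in> measurable M N"
proof -
  have "f \<in> measurable M nnb" using assms(2,3) by (simp add: measurable_nnb_iff Pi_iff)
  moreover have "measurable M N = measurable M nnb" by (rule measurable_cong_sets[OF refl assms(1)])
  ultimately show ?thesis by simp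
qed

locale noise_laws =
  fixes p1 p2 p3 :: "real measure"
  assumes prob_space: "prob_space p1" "prob_space p2" "prob_space p3"
    and sets_eq: "sets p1 = sets nnb" "sets p2 = sets nnb" "sets p3 = sets nnb"
begin

abbreviation "M \<equiv> noise_law p1 p2 p3"

lemma prob_space_M: "prob_space (M i)"
  unfolding noise_law_def using prob_space by (auto split: sum.split)

lemma sets_M: "sets (M i) = sets nnb"
  unfolding noise_law_def using sets_eq by (auto split: sum.split)

lemma space_M: "space (M i) = {0..}"
  using sets_M[THEN sets_eq_imp_space_eq] space_nnb by simp

sublocale PP: product_prob_space M I for I
  by (simp add: product_prob_space_def product_prob_space_axioms_def product_sigma_finite_def
      prob_space_M prob_space_imp_sigma_finite)

lemma component_borel_measurable: "(\<lambda>\<omega>. \<omega> i) \<in> borel_measurable (PiM I M)"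
proof (cases "i \<in> I")
  case True
  show ?thesis
    by (rule measurable_nnb_imp_borel[OF sets_M measurable_component_singleton[OF True]])
next
  case False
  then have "(\<lambda>\<omega>. undefined) \<omega> = \<omega> i" if "\<omega> \<in> space (PiM I M)" for \<omega>
    using that by (auto simp: space_PiM)
  then show ?thesis using measurable_cong[of "PiM I M" "\<lambda>\<omega>. undefined" "\<lambda>\<omega>. \<omega> i" borel] by simp
qed

lemma component_nonneg: "\<omega> \<in> space (PiM I M) \<Longrightarrow> i \<in> I \<Longrightarrow> \<omega> i \<ge> 0"
  using space_M by (auto simp: space_PiM PiE_iff)

lemma flow_f_measurable:
  "(\<lambda>\<omega>. flow_f n S (\<lambda>e. \<omega> (Inl e)) (\<lambda>y. \<omega> (Inr y)) e) \<in> borel_measurable (PiM I M)"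
proof (induction n arbitrary: e)
  case 0
  then show ?case using component_borel_measurable by simp
next
  case (Suc n)
  obtain t x t' x' where e: "e = ((t, x), (t', x'))" by (metis prod.collapse)
  show ?case
  proof (cases "(t, x) \<in> S")
    case False
    then show ?thesis unfolding e using component_borel_measurable by simp
  next
    case True
    note IH = Suc[of "((t - 1, x - 1), (t, x))"] Suc[of "((t - 1, x + 1), (t, x))"]
    show ?thesis
      unfolding e using True
      by (cases "x' = x + 1") (simp_all add: Let_def IH component_borel_measurable
          borel_measurable_add borel_measurable_max borel_measurable_diff)
  qed
qed

lemma flow_map_measurable:
  assumes "finite S" "S \<subseteq> Ztil"
  shows "flow_map S \<in> measurable (PiM (noise_index S) M) (PiM (ES S) (\<lambda>_. nnb))"
  unfolding flow_map_def
proof (rule measurable_restrict)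
  fix e assume e: "e \<in> ES S"
  have "flow S (\<lambda>e. \<omega> (Inl e)) (\<lambda>y. \<omega> (Inr y)) e \<ge> 0" if "\<omega> \<in> space (PiM (noise_index S) M)" for \<omega>
    using flow_nonneg[OF assms e] component_nonneg[OF that] unfolding noise_index_def by auto
  then show "(\<lambda>\<omega>. flow S (\<lambda>e. \<omega> (Inl e)) (\<lambda>y. \<omega> (Inr y)) e) \<in> measurable (PiM (noise_index S) M) nnb"
    unfolding measurable_nnb_iff flow_def using flow_f_measurable by auto
qed

lemma prob_space_PS: "finite S \<Longrightarrow> S \<subseteq> Ztil \<Longrightarrow> prob_space (PS p1 p2 p3 S)"
  unfolding PS_eq noise_eq
  by (rule prob_space.prob_space_distr[OF prob_space_PiM[OF prob_space_M] flow_map_measurable])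

lemma sets_PS: "sets (PS p1 p2 p3 S) = sets (PiM (ES S) (\<lambda>_. nnb))"
  unfolding PS_eq by simp

lemma emitted_measurable:
  assumes "Inr y \<in> I"
  shows "(\<lambda>\<omega>. emitted y \<omega> e) \<in> measurable (PiM I M) (M i)"
proof (rule measurable_nnb_nonnegI[OF sets_M])
  show "(\<lambda>\<omega>. emitted y \<omega> e) \<in> borel_measurable (PiM I M)"
    unfolding emitted_def node_out_def
    by (cases "snd (snd e) = snd (fst e) + 1")
      (auto intro!: borel_measurable_add borel_measurable_max borel_measurable_diff
        component_borel_measurable)
  show "emitted y \<omega> e \<ge> 0" if "\<omega> \<in> space (PiM I M)" for \<omega>
    using component_nonneg[OF that assms] unfolding emitted_def node_out_def by simp
qed

lemma collapse_noise_measurable: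
  "collapse_noise T y \<in> measurable (PiM (noise_index (insert y T)) M) (PiM (noise_index T) M)"
  unfolding collapse_noise_def
proof (rule measurable_restrict)
  fix i assume i: "i \<in> noise_index T"
  have y: "Inr y \<in> noise_index (insert y T)" unfolding noise_index_def by simp
  show "(\<lambda>\<omega>. case i of Inl e \<Rightarrow> if fst e = y then emitted y \<omega> e else \<omega> i | Inr z \<Rightarrow> \<omega> i)
      \<in> measurable (PiM (noise_index (insert y T)) M) (M i)"
  proof (cases i)
    case (Inl e)
    show ?thesis
    proof (cases "fst e = y")
      case True
      then show ?thesis using emitted_measurable[OF y] Inl by simp
    next
      case False
      then have "i \<in> noise_index (insert y T)"
        using i Inl unfolding noise_index_def in_edges_def by auto
      then show ?thesis using Inl False by simp
    qed
  next
    case (Inr z)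
    then have "i \<in> noise_index (insert y T)" using i unfolding noise_index_def by auto
    then show ?thesis using Inr by simp
  qed
qed

lemma distr_collapse_noise_no_succ:
  assumes "finite T" "y \<notin> T" "no_succ_in T y"
  shows "distr (PiM (noise_index (insert y T)) M) (PiM (noise_index T) M) (collapse_noise T y)
       = PiM (noise_index T) M"
proof -
  have out: "fst e \<noteq> y" if "Inl e \<in> noise_index T" for e
    using in_edges_from_no_succ[OF _ assms(3)] that unfolding noise_index_def by auto
  have "e \<in> in_edges (insert y T)" if "e \<in> in_edges T" for e
    using in_edges_from_no_succ[OF that assms(3)] that unfolding in_edges_def by auto
  then have sub: "noise_index T \<subseteq> noise_index (insert y T)"
    unfolding noise_index_def by auto
  have "collapse_noise T y = (\<lambda>\<omega>. restrict \<omega> (noise_index T))"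
    using out unfolding collapse_noise_def by (auto simp: fun_eq_iff split: sum.split)
  then have "distr (PiM (noise_index (insert y T)) M) (PiM (noise_index T) M) (collapse_noise T y)
      = distr (PiM (noise_index (insert y T)) M) (PiM (noise_index T) M) (\<lambda>\<omega>. restrict \<omega> (noise_index T))"
    by (simp only:)
  also have "\<dots> = PiM (noise_index T) M"
    using PP.distr_restrict[OF sub] finite_noise_index assms(1) by simp
  finally show ?thesis .
qed

end

section \<open>The outputs of a single vertex\<close>

definition triple_embed :: "'i \<Rightarrow> 'i \<Rightarrow> 'i \<Rightarrow> real \<times> real \<times> real \<Rightarrow> 'i \<Rightarrow> real" where
  "triple_embed a b c x =
     (\<lambda>i\<in>{a, b, c}. if i = a then fst x else if i = b then fst (snd x) else snd (snd x))"

context noise_laws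
begin

abbreviation "P3 \<equiv> p1 \<Otimes>\<^sub>M (p2 \<Otimes>\<^sub>M p3)"

lemma space_P3: "space P3 = {0..} \<times> ({0..} \<times> {0..})"
  using sets_eq by (simp add: space_pair_measure sets_eq_imp_space_eq space_nnb)

lemma emeasure_P3_Times:
  assumes "A \<in> sets p1" "B \<in> sets p2" "C \<in> sets p3"
  shows "emeasure P3 (A \<times> (B \<times> C)) = emeasure p1 A * (emeasure p2 B * emeasure p3 C)"
proof -
  interpret p2: prob_space p2 by (rule prob_space(2))
  interpret p3: prob_space p3 by (rule prob_space(3))
  interpret p23: pair_prob_space p2 p3 by unfold_locales
  have "B \<times> C \<in> sets (p2 \<Otimes>\<^sub>M p3)" using assms(2,3) by simp
  then show ?thesis
    using sigma_finite_measure.emeasure_pair_measure_Times[OF p23.P.sigma_finite_measure_axioms assms(1)]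
      p3.emeasure_pair_measure_Times[OF assms(2,3)] by simp
qed

lemma triple_embed_measurable:
  assumes "distinct [a, b, c]" "M a = p1" "M b = p2" "M c = p3"
  shows "triple_embed a b c \<in> measurable P3 (PiM {a, b, c} M)"
  unfolding triple_embed_def
proof (rule measurable_restrict)
  fix i assume "i \<in> {a, b, c}"
  then consider "i = a" | "i = b" | "i = c" by blast
  moreover have "b \<noteq> a" "c \<noteq> a" "c \<noteq> b" using assms(1) by auto
  ultimately show "(\<lambda>x. if i = a then fst x else if i = b then fst (snd x) else snd (snd x))
      \<in> measurable P3 (M i)"
    by cases (use assms(2-4) in simp_all)
qed

lemma distr_triple_embed:
  assumes abc: "distinct [a, b, c]" "M a = p1" "M b = p2" "M c = p3"
  shows "distr P3 (PiM {a, b, c} M) (triple_embed a b c) = PiM {a, b, c} M"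
proof (rule PP.PiM_eqI)
  fix A assume A: "\<And>i. i \<in> {a, b, c} \<Longrightarrow> A i \<in> sets (M i)"
  then have sets: "A a \<in> sets p1" "A b \<in> sets p2" "A c \<in> sets p3"
    using abc(2-4) by force+
  moreover have "space p1 = {0..}" "space p2 = {0..}" "space p3 = {0..}"
    using sets_eq by (simp_all add: sets_eq_imp_space_eq space_nnb)
  ultimately have "A a \<times> (A b \<times> A c) \<subseteq> space P3"
    unfolding space_P3 by (metis Sigma_mono sets.sets_into_space)
  then have "triple_embed a b c -` Pi\<^sub>E {a, b, c} A \<inter> space P3 = A a \<times> (A b \<times> A c)"
    using abc(1) unfolding triple_embed_def by (auto simp: PiE_iff)
  moreover have "Pi\<^sub>E {a, b, c} A \<in> sets (PiM {a, b, c} M)"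
    using A by (intro sets_PiM_I_finite) auto
  ultimately have "emeasure (distr P3 (PiM {a, b, c} M) (triple_embed a b c)) (Pi\<^sub>E {a, b, c} A)
      = emeasure P3 (A a \<times> (A b \<times> A c))"
    using emeasure_distr[OF triple_embed_measurable[OF abc]] by simp
  also have "\<dots> = (\<Prod>i\<in>{a, b, c}. emeasure (M i) (A i))"
    using emeasure_P3_Times[OF sets] abc by (simp add: mult.assoc)
  finally show "emeasure (distr P3 (PiM {a, b, c} M) (triple_embed a b c)) (Pi\<^sub>E {a, b, c} A)
      = (\<Prod>i\<in>{a, b, c}. emeasure (M i) (A i))" .
qed simp_all

lemma R3_measurable: "R3 \<in> measurable P3 P3"
proof -
  have proj1: "fst \<in> borel_measurable P3"
    by (rule measurable_nnb_imp_borel[OF sets_eq(1)]) simp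
  have proj2: "(\<lambda>x. fst (snd x)) \<in> borel_measurable P3"
    by (rule measurable_nnb_imp_borel[OF sets_eq(2)]) simp
  have proj3: "(\<lambda>x. snd (snd x)) \<in> borel_measurable P3"
    by (rule measurable_nnb_imp_borel[OF sets_eq(3)]) simp
  have "(\<lambda>x. snd (snd x) + max (fst x - fst (snd x)) 0) \<in> measurable P3 p1"
    by (rule measurable_nnb_nonnegI[OF sets_eq(1)])
      (auto simp: space_P3 intro!: borel_measurable_add borel_measurable_max borel_measurable_diff proj1 proj2 proj3)
  moreover have "(\<lambda>x. snd (snd x) + max (fst (snd x) - fst x) 0) \<in> measurable P3 p2"
    by (rule measurable_nnb_nonnegI[OF sets_eq(2)])
      (auto simp: space_P3 intro!: borel_measurable_add borel_measurable_max borel_measurable_diff proj1 proj2 proj3)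
  moreover have "(\<lambda>x. min (fst x) (fst (snd x))) \<in> measurable P3 p3"
    by (rule measurable_nnb_nonnegI[OF sets_eq(3)])
      (auto simp: space_P3 intro!: borel_measurable_min proj1 proj2 proj3)
  ultimately have "(\<lambda>x. (snd (snd x) + max (fst x - fst (snd x)) 0,
      snd (snd x) + max (fst (snd x) - fst x) 0, min (fst x) (fst (snd x)))) \<in> measurable P3 P3"
    by (intro measurable_Pair)
  moreover have "R3 = (\<lambda>x. (snd (snd x) + max (fst x - fst (snd x)) 0,
      snd (snd x) + max (fst (snd x) - fst x) 0, min (fst x) (fst (snd x))))"
    unfolding R3_def by (auto simp: fun_eq_iff)
  ultimately show ?thesis by simp
qed

end

definition vertex_outputs :: "pt \<Rightarrow> (edge + pt) set \<Rightarrow> (edge + pt \<Rightarrow> real) \<Rightarrow> edge + pt \<Rightarrow> real" where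
  "vertex_outputs y C \<omega> = (\<lambda>i\<in>C. emitted y \<omega> (projl i))"

definition in_index :: "pt \<Rightarrow> (edge + pt) set" where
  "in_index y = {Inl (sw_edge y), Inl (nw_edge y), Inr y}"

definition out_index :: "pt set \<Rightarrow> pt \<Rightarrow> (edge + pt) set" where
  "out_index T y = {i \<in> noise_index T. \<exists>e. i = Inl e \<and> fst e = y}"

lemma vertex_outputs_triple_embed:
  assumes "C \<subseteq> {Inl (ne_edge y), Inl (se_edge y)}"
  shows "vertex_outputs y C (triple_embed (Inl (sw_edge y)) (Inl (nw_edge y)) (Inr y) x)
       = restrict (triple_embed (Inl (ne_edge y)) (Inl (se_edge y)) (Inr y) (R3 x)) C"
proof -
  obtain r s t where x: "x = (r, s, t)" by (metis prod.collapse)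
  have "sw_edge y \<noteq> nw_edge y" "ne_edge y \<noteq> se_edge y"
    unfolding sw_edge_def nw_edge_def ne_edge_def se_edge_def by simp_all
  then show ?thesis
    using assms unfolding x vertex_outputs_def triple_embed_def emitted_def node_out_def R3_def
    by (auto simp: fun_eq_iff ne_edge_def se_edge_def)
qed

locale stationary_laws = noise_laws +
  assumes R3_invariant:
    "distr (p1 \<Otimes>\<^sub>M (p2 \<Otimes>\<^sub>M p3)) (p1 \<Otimes>\<^sub>M (p2 \<Otimes>\<^sub>M p3)) R3 = p1 \<Otimes>\<^sub>M (p2 \<Otimes>\<^sub>M p3)"
begin

text \<open>The only use of R3-invariance: the vertex map is R3 in coordinates.\<close>
lemma distr_vertex_outputs:
  assumes C: "C \<subseteq> {Inl (ne_edge y), Inl (se_edge y)}"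
  shows "distr (PiM (in_index y) M) (PiM C M) (vertex_outputs y C) = PiM C M"
proof -
  define a b c u v :: "edge + pt"
    where "a = Inl (sw_edge y)" and "b = Inl (nw_edge y)" and "c = Inr y"
      and "u = Inl (ne_edge y)" and "v = Inl (se_edge y)"
  note abcuv = a_def b_def c_def u_def v_def
  have abc: "distinct [a, b, c]" "M a = p1" "M b = p2" "M c = p3"
    and uvc: "distinct [u, v, c]" "M u = p1" "M v = p2"
    unfolding abcuv noise_law_def ascending_def sw_edge_def nw_edge_def ne_edge_def se_edge_def
    by simp_all
  have Cuvc: "C \<subseteq> {u, v, c}" using C unfolding abcuv by auto
  have meas: "vertex_outputs y C \<in> measurable (PiM {a, b, c} M) (PiM C M)"
    unfolding vertex_outputs_def
    by (rule measurable_restrict) (rule emitted_measurable, simp add: c_def)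
  have "distr (PiM {a, b, c} M) (PiM C M) (vertex_outputs y C)
      = distr (distr P3 (PiM {a, b, c} M) (triple_embed a b c)) (PiM C M) (vertex_outputs y C)"
    by (simp only: distr_triple_embed[OF abc])
  also have "\<dots> = distr P3 (PiM C M) (vertex_outputs y C \<circ> triple_embed a b c)"
    by (rule distr_distr[OF meas triple_embed_measurable[OF abc]])
  also have "\<dots> = distr P3 (PiM C M) ((\<lambda>\<omega>. restrict \<omega> C) \<circ> (triple_embed u v c \<circ> R3))"
    using vertex_outputs_triple_embed[OF C] unfolding abcuv by (simp add: comp_def)
  also have "\<dots> = distr (distr P3 (PiM {u, v, c} M) (triple_embed u v c \<circ> R3)) (PiM C M)
      (\<lambda>\<omega>. restrict \<omega> C)"
    by (rule distr_distr[symmetric, OF measurable_restrict_subset[OF Cuvc]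
          measurable_comp[OF R3_measurable triple_embed_measurable[OF uvc abc(4)]]])
  also have "distr P3 (PiM {u, v, c} M) (triple_embed u v c \<circ> R3)
      = distr (distr P3 P3 R3) (PiM {u, v, c} M) (triple_embed u v c)"
    by (rule distr_distr[symmetric, OF triple_embed_measurable[OF uvc abc(4)] R3_measurable])
  also have "\<dots> = PiM {u, v, c} M"
    unfolding R3_invariant by (rule distr_triple_embed[OF uvc abc(4)])
  also have "distr (PiM {u, v, c} M) (PiM C M) (\<lambda>\<omega>. restrict \<omega> C) = PiM C M"
    by (rule PP.distr_restrict[OF Cuvc, symmetric]) simp
  finally show ?thesis unfolding in_index_def abcuv .
qed

end

lemma noise_index_insert_no_pred:
  assumes "no_pred_in T y" "y \<notin> T" "y \<in> Ztil"
  shows "noise_index (insert y T) = (noise_index T - out_index T y) \<union> in_index y"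
  unfolding noise_index_def in_edges_insert_no_pred[OF assms] in_index_def out_index_def by auto

lemma in_index_disjoint: "y \<notin> T \<Longrightarrow> noise_index T \<inter> in_index y = {}"
  unfolding noise_index_def in_index_def in_edges_def sw_edge_def nw_edge_def by auto

lemma out_index_subset: "out_index T y \<subseteq> {Inl (ne_edge y), Inl (se_edge y)}"
proof
  fix i assume "i \<in> out_index T y"
  then obtain e where e: "i = Inl e" "fst e = y" "e \<in> Edges"
    unfolding out_index_def noise_index_def in_edges_def by auto
  then show "i \<in> {Inl (ne_edge y), Inl (se_edge y)}" using Edges_out_cases[OF e(3)] by auto
qed

lemma collapse_noise_merge:
  assumes "y \<notin> T"
  shows "collapse_noise T y (merge (noise_index T - out_index T y) (in_index y) (\<omega>, \<omega>'))
       = merge (noise_index T - out_index T y) (out_index T y) (\<omega>, vertex_outputs y (out_index T y) \<omega>')"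
    (is "collapse_noise T y (merge ?A ?B (\<omega>, \<omega>')) = merge ?A ?C _")
proof (rule ext)
  fix i
  have "merge ?A ?B (\<omega>, \<omega>') j = \<omega>' j" if "j \<in> in_index y" for j
    using in_index_disjoint[OF assms] that by (auto simp: merge_def)
  moreover have "Inl (sw_edge y) \<in> in_index y" "Inl (nw_edge y) \<in> in_index y" "Inr y \<in> in_index y"
    unfolding in_index_def by simp_all
  ultimately have emit: "emitted y (merge ?A ?B (\<omega>, \<omega>')) = emitted y \<omega>'"
    unfolding emitted_def by (simp add: fun_eq_iff)
  consider "i \<in> ?C" | "i \<in> ?A" | "i \<notin> noise_index T"
    unfolding out_index_def by blast
  then show "collapse_noise T y (merge ?A ?B (\<omega>, \<omega>')) i = merge ?A ?C (\<omega>, vertex_outputs y ?C \<omega>') i"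
  proof cases
    case 1
    then obtain e where "i = Inl e" "fst e = y" "i \<in> noise_index T" unfolding out_index_def by auto
    then show ?thesis using 1 emit by (simp add: collapse_noise_def vertex_outputs_def merge_def)
  next
    case 2
    then have "i \<notin> ?B" "\<And>e. i = Inl e \<Longrightarrow> fst e \<noteq> y" "i \<in> noise_index T"
      using in_index_disjoint[OF assms] unfolding out_index_def by auto
    then show ?thesis using 2 by (cases i) (auto simp: collapse_noise_def merge_def)
  next
    case 3
    then show ?thesis unfolding collapse_noise_def merge_def out_index_def by auto
  qed
qed

lemma distr_pair_snd:
  assumes "g \<in> measurable N T" "distr N T g = T" "sigma_finite_measure T"
  shows "distr (M \<Otimes>\<^sub>M N) (M \<Otimes>\<^sub>M T) (\<lambda>(x, y). (x, g y)) = M \<Otimes>\<^sub>M T"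
  using pair_measure_distr[of "\<lambda>x. x" M M g N T] assms by (simp add: distr_id)

context stationary_laws
begin

lemma distr_collapse_noise_no_pred:
  assumes T: "finite T" and y: "y \<notin> T" "no_pred_in T y" "y \<in> Ztil"
  shows "distr (PiM (noise_index (insert y T)) M) (PiM (noise_index T) M) (collapse_noise T y)
       = PiM (noise_index T) M"
proof -
  define A B C where "A = noise_index T - out_index T y" and "B = in_index y"
    and "C = out_index T y"
  have fin: "finite A" "finite B" "finite C"
    using finite_noise_index[OF T] unfolding A_def B_def C_def in_index_def out_index_def by auto
  have AB: "A \<inter> B = {}" and AC: "A \<inter> C = {}"
    using in_index_disjoint[OF y(1)] unfolding A_def B_def C_def by auto
  have idx: "noise_index (insert y T) = A \<union> B" "noise_index T = A \<union> C"
    using noise_index_insert_no_pred[OF y(2,1,3)] unfolding A_def B_def C_def out_index_def by auto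
  have VO: "distr (PiM B M) (PiM C M) (vertex_outputs y C) = PiM C M"
    unfolding B_def C_def by (rule distr_vertex_outputs[OF out_index_subset])
  have VO_meas: "vertex_outputs y C \<in> measurable (PiM B M) (PiM C M)"
    unfolding vertex_outputs_def
    by (rule measurable_restrict) (rule emitted_measurable, simp add: B_def in_index_def)
  have "distr (PiM (A \<union> B) M) (PiM (A \<union> C) M) (collapse_noise T y)
      = distr (distr (PiM A M \<Otimes>\<^sub>M PiM B M) (PiM (A \<union> B) M) (merge A B)) (PiM (A \<union> C) M)
          (collapse_noise T y)"
    using PP.distr_merge[OF AB fin(1,2)] by simp
  also have "\<dots> = distr (PiM A M \<Otimes>\<^sub>M PiM B M) (PiM (A \<union> C) M) (collapse_noise T y \<circ> merge A B)"
    using collapse_noise_measurable[of T y] idx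
    by (intro distr_distr) (simp_all add: measurable_merge)
  also have "\<dots> = distr (PiM A M \<Otimes>\<^sub>M PiM B M) (PiM (A \<union> C) M)
      (merge A C \<circ> (\<lambda>(\<omega>, \<omega>'). (\<omega>, vertex_outputs y C \<omega>')))"
    using collapse_noise_merge[OF y(1)] unfolding A_def B_def C_def
    by (intro distr_cong) (auto simp: split_beta')
  also have "\<dots> = distr (distr (PiM A M \<Otimes>\<^sub>M PiM B M) (PiM A M \<Otimes>\<^sub>M PiM C M)
      (\<lambda>(\<omega>, \<omega>'). (\<omega>, vertex_outputs y C \<omega>'))) (PiM (A \<union> C) M) (merge A C)"
    using VO_meas by (intro distr_distr[symmetric]) (simp_all add: measurable_merge split_beta')
  also have "distr (PiM A M \<Otimes>\<^sub>M PiM B M) (PiM A M \<Otimes>\<^sub>M PiM C M)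
      (\<lambda>(\<omega>, \<omega>'). (\<omega>, vertex_outputs y C \<omega>')) = PiM A M \<Otimes>\<^sub>M PiM C M"
    by (rule distr_pair_snd[OF VO_meas VO prob_space_imp_sigma_finite[OF prob_space_PiM[OF prob_space_M]]])
  also have "distr (PiM A M \<Otimes>\<^sub>M PiM C M) (PiM (A \<union> C) M) (merge A C) = PiM (A \<union> C) M"
    by (rule PP.distr_merge[OF AC fin(1,3)])
  finally show ?thesis unfolding idx .
qed

end

section \<open>Consistency\<close>

lemma distr_restrict_restrict:
  assumes "J \<subseteq> K" "(\<lambda>\<omega>. restrict \<omega> K) \<in> measurable N Y" "(\<lambda>\<omega>. restrict \<omega> J) \<in> measurable Y X"
  shows "distr (distr N Y (\<lambda>\<omega>. restrict \<omega> K)) X (\<lambda>\<omega>. restrict \<omega> J) = distr N X (\<lambda>\<omega>. restrict \<omega> J)"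
proof -
  have "distr (distr N Y (\<lambda>\<omega>. restrict \<omega> K)) X (\<lambda>\<omega>. restrict \<omega> J)
      = distr N X ((\<lambda>\<omega>. restrict \<omega> J) \<circ> (\<lambda>\<omega>. restrict \<omega> K))"
    by (rule distr_distr[OF assms(3,2)])
  also have "\<dots> = distr N X (\<lambda>\<omega>. restrict \<omega> J)"
    by (rule distr_cong) (use assms(1) in \<open>auto simp: fun_eq_iff\<close>)
  finally show ?thesis .
qed

lemma distr_restrict_self:
  assumes "sets N = sets (PiM K B)"
  shows "distr N (PiM K B) (\<lambda>\<omega>. restrict \<omega> K) = N"
proof -
  have "distr N (PiM K B) (\<lambda>\<omega>. restrict \<omega> K) = distr N (PiM K B) (\<lambda>\<omega>. \<omega>)"
    using sets_eq_imp_space_eq[OF assms] by (intro distr_cong) (auto simp: space_PiM)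
  then show ?thesis using distr_id2[OF assms[symmetric]] by simp
qed

context stationary_laws
begin

lemma measurable_PS: "measurable (PS p1 p2 p3 S) X = measurable (PiM (ES S) (\<lambda>_. nnb)) X"
  by (rule measurable_cong_sets[OF sets_PS refl])

lemma PS_marginal_insert:
  assumes T: "finite T" "T \<subseteq> Ztil" and y: "y \<in> Ztil" "y \<notin> T"
    and extreme: "no_succ_in T y \<or> no_pred_in T y"
  shows "distr (PS p1 p2 p3 (insert y T)) (PiM (ES T) (\<lambda>_. nnb)) (\<lambda>\<omega>. restrict \<omega> (ES T))
       = PS p1 p2 p3 T"
proof -
  have T': "finite (insert y T)" "insert y T \<subseteq> Ztil" using T y by auto
  have collapse: "distr (PiM (noise_index (insert y T)) M) (PiM (noise_index T) M) (collapse_noise T y)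
      = PiM (noise_index T) M"
    using extreme distr_collapse_noise_no_succ[OF T(1) y(2)] distr_collapse_noise_no_pred[OF T(1) y(2) _ y(1)]
    by blast
  have restr: "(\<lambda>\<omega>. restrict \<omega> (ES T)) \<in> measurable (PiM (ES (insert y T)) (\<lambda>_. nnb)) (PiM (ES T) (\<lambda>_. nnb))"
    using ES_mono[of T "insert y T"] by (intro measurable_restrict_subset) auto
  have "distr (PS p1 p2 p3 (insert y T)) (PiM (ES T) (\<lambda>_. nnb)) (\<lambda>\<omega>. restrict \<omega> (ES T))
      = distr (PiM (noise_index (insert y T)) M) (PiM (ES T) (\<lambda>_. nnb))
          ((\<lambda>\<omega>. restrict \<omega> (ES T)) \<circ> flow_map (insert y T))"
    unfolding PS_eq noise_eq by (rule distr_distr[OF restr flow_map_measurable[OF T']])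
  also have "\<dots> = distr (PiM (noise_index (insert y T)) M) (PiM (ES T) (\<lambda>_. nnb))
      (flow_map T \<circ> collapse_noise T y)"
    using flow_map_insert[OF T y extreme] by (intro distr_cong) simp_all
  also have "\<dots> = distr (distr (PiM (noise_index (insert y T)) M) (PiM (noise_index T) M)
      (collapse_noise T y)) (PiM (ES T) (\<lambda>_. nnb)) (flow_map T)"
    by (rule distr_distr[symmetric, OF flow_map_measurable[OF T] collapse_noise_measurable])
  also have "\<dots> = PS p1 p2 p3 T"
    unfolding collapse PS_eq noise_eq ..
  finally show ?thesis .
qed

lemma PS_marginal_subset:
  assumes S: "hexdom S" and T: "finite T" "S \<subseteq> T" "T \<subseteq> Ztil"
  shows "distr (PS p1 p2 p3 T) (PiM (ES S) (\<lambda>_. nnb)) (\<lambda>\<omega>. restrict \<omega> (ES S)) = PS p1 p2 p3 S"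
  using T
proof (induction "card (T - S)" arbitrary: T)
  case 0
  then have "T = S" by auto
  then show ?case by (simp only:) (rule distr_restrict_self[OF sets_PS])
next
  case (Suc n)
  then have "T - S \<noteq> {}" by auto
  then obtain y where y: "y \<in> T - S" "no_succ_in T y \<or> no_pred_in T y"
    using hexdom_peel[OF S Suc.prems(1,3)] by blast
  define T0 where "T0 = T - {y}"
  have T0: "finite T0" "S \<subseteq> T0" "T0 \<subseteq> Ztil" "card (T0 - S) = n" "insert y T0 = T"
    using Suc y(1) unfolding T0_def by (auto simp: Diff_insert2[symmetric])
  have y': "y \<in> Ztil" "y \<notin> T0" using y(1) Suc.prems(3) unfolding T0_def by auto
  have "no_succ_in T0 y \<or> no_pred_in T0 y"
    using y(2) no_succ_in_mono no_pred_in_mono unfolding T0_def by blast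
  from PS_marginal_insert[OF T0(1,3) y' this]
  have step: "distr (PS p1 p2 p3 T) (PiM (ES T0) (\<lambda>_. nnb)) (\<lambda>\<omega>. restrict \<omega> (ES T0)) = PS p1 p2 p3 T0"
    unfolding T0(5) .
  have "ES S \<subseteq> ES T0" "ES T0 \<subseteq> ES T"
    using ES_mono[OF T0(2)] ES_mono[of T0 T] T0(5) by auto
  then have "distr (PS p1 p2 p3 T) (PiM (ES S) (\<lambda>_. nnb)) (\<lambda>\<omega>. restrict \<omega> (ES S))
      = distr (PS p1 p2 p3 T0) (PiM (ES S) (\<lambda>_. nnb)) (\<lambda>\<omega>. restrict \<omega> (ES S))"
    unfolding step[symmetric]
    by (intro distr_restrict_restrict[symmetric]) (simp_all add: measurable_PS measurable_restrict_subset)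
  also have "\<dots> = PS p1 p2 p3 S" using Suc.hyps(1) T0(1-4) by simp
  finally show ?case .
qed

lemma PS_consistent:
  assumes "hexdom S'" "hexdom S''" "S' \<subseteq> S''"
  shows "distr (PS p1 p2 p3 S'') (PiM (ES S') (\<lambda>_. nnb)) (\<lambda>\<omega>. restrict \<omega> (ES S')) = PS p1 p2 p3 S'"
  using PS_marginal_subset[OF assms(1) hexdom_finite[OF assms(2)] assms(3) hexdom_subset_Ztil[OF assms(2)]] .

end

section \<open>The infinite-volume measure\<close>

lemma restrict_measurable_borel:
  "J \<subseteq> K \<Longrightarrow> (\<lambda>\<omega>. restrict \<omega> J) \<in> measurable (PiM K (\<lambda>_. nnb)) (PiM J (\<lambda>_. borel :: real measure))"
proof (rule measurable_restrict)
  fix i assume "J \<subseteq> K" "i \<in> J"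
  then have "(\<lambda>\<omega>. \<omega> i) \<in> measurable (PiM K (\<lambda>_. nnb)) nnb"
    by (intro measurable_component_singleton) auto
  then show "(\<lambda>\<omega>. \<omega> i) \<in> measurable (PiM K (\<lambda>_. nnb)) borel"
    by (rule measurable_nnb_imp_borel[OF refl])
qed

text \<open>The Kolmogorov limit lives on real-valued configurations; clamping at 0 moves it to
  nonnegative ones without changing marginals that are already nonnegative.\<close>
definition clamp :: "edge set \<Rightarrow> (edge \<Rightarrow> real) \<Rightarrow> edge \<Rightarrow> real" where
  "clamp J \<omega> = (\<lambda>e\<in>J. max 0 (\<omega> e))"

lemma clamp_measurable: "clamp J \<in> measurable (PiM J (\<lambda>_. borel)) (PiM J (\<lambda>_. nnb))"
  unfolding clamp_def
proof (rule measurable_restrict)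
  fix e assume "e \<in> J"
  then have "(\<lambda>\<omega>. \<omega> e) \<in> borel_measurable (PiM J (\<lambda>_. borel :: real measure))"
    by (intro measurable_component_singleton)
  then show "(\<lambda>\<omega>. max 0 (\<omega> e)) \<in> measurable (PiM J (\<lambda>_. borel)) nnb"
    unfolding measurable_nnb_iff by (auto intro: borel_measurable_max)
qed

definition diamond_index :: "edge set \<Rightarrow> nat" where
  "diamond_index J = (LEAST m. J \<subseteq> ES (diamond m))"

lemma subset_ES_diamond_index: "finite J \<Longrightarrow> J \<subseteq> Edges \<Longrightarrow> J \<subseteq> ES (diamond (diamond_index J))"
  unfolding diamond_index_def by (rule LeastI_ex[OF ex_diamond_ES_superset])

lemma diamond_index_mono:
  "finite H \<Longrightarrow> H \<subseteq> Edges \<Longrightarrow> J \<subseteq> H \<Longrightarrow> diamond_index J \<le> diamond_index H"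
  using subset_ES_diamond_index[of H] unfolding diamond_index_def by (intro Least_le) auto

context stationary_laws
begin

lemma PS_diamond_marginal:
  assumes "hexdom S" "ES S \<subseteq> ES (diamond m)"
  shows "distr (PS p1 p2 p3 (diamond m)) (PiM (ES S) (\<lambda>_. nnb)) (\<lambda>\<omega>. restrict \<omega> (ES S))
       = PS p1 p2 p3 S"
proof -
  obtain n0 where n0: "S \<subseteq> diamond n0"
    using ex_diamond_superset[OF hexdom_finite hexdom_subset_Ztil] assms(1) by blast
  define n where "n = max n0 m"
  have Sn: "S \<subseteq> diamond n" and mn: "diamond m \<subseteq> diamond n"
    using n0 diamond_mono[of n0 n] diamond_mono[of m n] unfolding n_def by auto
  have "distr (PS p1 p2 p3 (diamond m)) (PiM (ES S) (\<lambda>_. nnb)) (\<lambda>\<omega>. restrict \<omega> (ES S))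
      = distr (PS p1 p2 p3 (diamond n)) (PiM (ES S) (\<lambda>_. nnb)) (\<lambda>\<omega>. restrict \<omega> (ES S))"
    unfolding PS_consistent[OF hexdom_diamond hexdom_diamond mn, symmetric]
    by (rule distr_restrict_restrict[OF assms(2)])
      (simp_all add: measurable_PS measurable_restrict_subset[OF ES_mono[OF mn]]
        measurable_restrict_subset[OF assms(2)])
  also have "\<dots> = PS p1 p2 p3 S" by (rule PS_consistent[OF assms(1) hexdom_diamond Sn])
  finally show ?thesis .
qed

definition fdd :: "edge set \<Rightarrow> (edge \<Rightarrow> real) measure" where
  "fdd J = distr (PS p1 p2 p3 (diamond (diamond_index J))) (PiM J (\<lambda>_. borel)) (\<lambda>\<omega>. restrict \<omega> J)"

lemma fdd_diamond:
  assumes "J \<subseteq> ES (diamond m)" "finite J" "J \<subseteq> Edges" "diamond_index J \<le> m"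
  shows "distr (PS p1 p2 p3 (diamond m)) (PiM J (\<lambda>_. borel)) (\<lambda>\<omega>. restrict \<omega> J) = fdd J"
proof -
  let ?k = "diamond_index J"
  have mono: "diamond ?k \<subseteq> diamond m" by (rule diamond_mono[OF assms(4)])
  have "distr (PS p1 p2 p3 (diamond m)) (PiM J (\<lambda>_. borel)) (\<lambda>\<omega>. restrict \<omega> J)
      = distr (distr (PS p1 p2 p3 (diamond m)) (PiM (ES (diamond ?k)) (\<lambda>_. nnb))
          (\<lambda>\<omega>. restrict \<omega> (ES (diamond ?k)))) (PiM J (\<lambda>_. borel)) (\<lambda>\<omega>. restrict \<omega> J)"
    using subset_ES_diamond_index[OF assms(2,3)] ES_mono[OF mono]
    by (intro distr_restrict_restrict[symmetric])
      (simp_all add: measurable_PS measurable_restrict_subset restrict_measurable_borel)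
  also have "\<dots> = fdd J"
    unfolding PS_consistent[OF hexdom_diamond hexdom_diamond mono] fdd_def ..
  finally show ?thesis .
qed

lemma fdd_projective:
  assumes "J \<subseteq> H" "finite H" "H \<subseteq> Edges"
  shows "fdd J = distr (fdd H) (PiM J (\<lambda>_. borel)) (\<lambda>f. restrict f J)"
proof -
  have J: "finite J" "J \<subseteq> Edges" using assms finite_subset by auto
  have H: "H \<subseteq> ES (diamond (diamond_index H))" by (rule subset_ES_diamond_index[OF assms(2,3)])
  have "distr (fdd H) (PiM J (\<lambda>_. borel)) (\<lambda>f. restrict f J)
      = distr (PS p1 p2 p3 (diamond (diamond_index H))) (PiM J (\<lambda>_. borel)) (\<lambda>f. restrict f J)"
    unfolding fdd_def using H assms(1)
    by (intro distr_restrict_restrict)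
      (simp_all add: measurable_PS measurable_restrict_subset restrict_measurable_borel)
  also have "\<dots> = fdd J"
    using assms(1) H J diamond_index_mono[OF assms(2,3,1)] by (intro fdd_diamond) auto
  finally show ?thesis by simp
qed

lemma prob_space_fdd:
  assumes "finite J" "J \<subseteq> Edges"
  shows "prob_space (fdd J)"
  unfolding fdd_def
proof (rule prob_space.prob_space_distr[OF prob_space_PS[OF hexdom_finite hexdom_subset_Ztil]])
  show "(\<lambda>\<omega>. restrict \<omega> J) \<in> measurable (PS p1 p2 p3 (diamond (diamond_index J))) (PiM J (\<lambda>_. borel))"
    unfolding measurable_PS by (rule restrict_measurable_borel[OF subset_ES_diamond_index[OF assms]])
qed (rule hexdom_diamond)+

end

lemma (in polish_projective) distr_lim_restrict:
  assumes "finite J" "J \<subseteq> I"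
  shows "distr lim (PiM J (\<lambda>_. borel)) (\<lambda>\<omega>. restrict \<omega> J) = P J"
proof (rule measure_eqI)
  fix A assume "A \<in> sets (distr lim (PiM J (\<lambda>_. borel)) (\<lambda>\<omega>. restrict \<omega> J))"
  then show "emeasure (distr lim (PiM J (\<lambda>_. borel)) (\<lambda>\<omega>. restrict \<omega> J)) A = emeasure (P J) A"
    using emeasure_distr_restrict[OF assms(2) sets_lim] emeasure_lim_emb[OF assms(2,1)] by simp
qed (simp add: sets_P[OF assms])

context stationary_laws
begin

lemma fdd_clamp:
  assumes "finite J" "J \<subseteq> Edges"
  shows "distr (fdd J) (PiM J (\<lambda>_. nnb)) (clamp J)
       = distr (PS p1 p2 p3 (diamond (diamond_index J))) (PiM J (\<lambda>_. nnb)) (\<lambda>\<omega>. restrict \<omega> J)"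
proof -
  let ?D = "diamond (diamond_index J)"
  have J: "J \<subseteq> ES ?D" by (rule subset_ES_diamond_index[OF assms])
  have "distr (fdd J) (PiM J (\<lambda>_. nnb)) (clamp J)
      = distr (PS p1 p2 p3 ?D) (PiM J (\<lambda>_. nnb)) (clamp J \<circ> (\<lambda>\<omega>. restrict \<omega> J))"
    unfolding fdd_def
    by (rule distr_distr[OF clamp_measurable])
      (simp add: measurable_PS restrict_measurable_borel[OF J])
  also have "\<dots> = distr (PS p1 p2 p3 ?D) (PiM J (\<lambda>_. nnb)) (\<lambda>\<omega>. restrict \<omega> J)"
  proof (rule distr_cong)
    fix \<omega> assume "\<omega> \<in> space (PS p1 p2 p3 ?D)"
    then have "\<omega> e \<ge> 0" if "e \<in> ES ?D" for e
      using that sets_eq_imp_space_eq[OF sets_PS] by (auto simp: space_PiM PiE_iff space_nnb)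
    then show "(clamp J \<circ> (\<lambda>\<omega>. restrict \<omega> J)) \<omega> = restrict \<omega> J"
      using J by (auto simp: clamp_def fun_eq_iff)
  qed simp_all
  finally show ?thesis .
qed

lemma PS_extension_exists:
  "\<exists>P. prob_space P \<and> sets P = sets (PiM Edges (\<lambda>_. nnb)) \<and>
     (\<forall>S. hexdom S \<longrightarrow> distr P (PiM (ES S) (\<lambda>_. nnb)) (\<lambda>\<omega>. restrict \<omega> (ES S)) = PS p1 p2 p3 S)"
proof -
  interpret K: polish_projective Edges fdd
    unfolding polish_projective_def projective_family_def using fdd_projective prob_space_fdd by blast
  have measurable_lim: "measurable K.lim X = measurable (PiM Edges (\<lambda>_. borel)) X" for X :: "'z measure"
    by (rule measurable_cong_sets[OF K.sets_lim refl])
  define P where "P = distr K.lim (PiM Edges (\<lambda>_. nnb)) (clamp Edges)"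
  have clamp_lim: "clamp Edges \<in> measurable K.lim (PiM Edges (\<lambda>_. nnb))"
    unfolding measurable_lim by (rule clamp_measurable)
  have "distr P (PiM (ES S) (\<lambda>_. nnb)) (\<lambda>\<omega>. restrict \<omega> (ES S)) = PS p1 p2 p3 S" if S: "hexdom S" for S
  proof -
    let ?E = "ES S"
    have E: "finite ?E" "?E \<subseteq> Edges" using finite_ES[OF hexdom_finite[OF S]] ES_subset_Edges by auto
    have "distr P (PiM ?E (\<lambda>_. nnb)) (\<lambda>\<omega>. restrict \<omega> ?E)
        = distr K.lim (PiM ?E (\<lambda>_. nnb)) ((\<lambda>\<omega>. restrict \<omega> ?E) \<circ> clamp Edges)"
      unfolding P_def by (rule distr_distr[OF measurable_restrict_subset[OF E(2)] clamp_lim])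
    also have "\<dots> = distr K.lim (PiM ?E (\<lambda>_. nnb)) (clamp ?E \<circ> (\<lambda>\<omega>. restrict \<omega> ?E))"
      using E(2) by (intro distr_cong) (auto simp: clamp_def fun_eq_iff)
    also have "\<dots> = distr (distr K.lim (PiM ?E (\<lambda>_. borel)) (\<lambda>\<omega>. restrict \<omega> ?E)) (PiM ?E (\<lambda>_. nnb)) (clamp ?E)"
      by (rule distr_distr[symmetric, OF clamp_measurable])
        (simp add: measurable_lim measurable_restrict_subset[OF E(2)])
    also have "\<dots> = distr (PS p1 p2 p3 (diamond (diamond_index ?E))) (PiM ?E (\<lambda>_. nnb)) (\<lambda>\<omega>. restrict \<omega> ?E)"
      unfolding K.distr_lim_restrict[OF E] by (rule fdd_clamp[OF E])
    also have "\<dots> = PS p1 p2 p3 S"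
      by (rule PS_diamond_marginal[OF S subset_ES_diamond_index[OF E]])
    finally show ?thesis .
  qed
  moreover have "prob_space P"
    unfolding P_def by (rule prob_space.prob_space_distr[OF K.P.prob_space_axioms clamp_lim])
  ultimately show ?thesis unfolding P_def by auto
qed

end

context noise_laws
begin

lemma PS_extension_unique:
  assumes P: "prob_space P" "sets P = sets (PiM Edges (\<lambda>_. nnb))"
    "\<And>S. hexdom S \<Longrightarrow> distr P (PiM (ES S) (\<lambda>_. nnb)) (\<lambda>\<omega>. restrict \<omega> (ES S)) = PS p1 p2 p3 S"
  assumes Q: "sets Q = sets (PiM Edges (\<lambda>_. nnb))"
    "\<And>S. hexdom S \<Longrightarrow> distr Q (PiM (ES S) (\<lambda>_. nnb)) (\<lambda>\<omega>. restrict \<omega> (ES S)) = PS p1 p2 p3 S"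
  shows "P = Q"
proof (rule measure_eqI_PiM_infinite[OF P(2) Q(1)])
  show "finite_measure P" using P(1) by (rule prob_space.finite_measure)
  fix J A assume J: "finite J" "J \<subseteq> Edges" and A: "\<And>i. i \<in> J \<Longrightarrow> A i \<in> sets nnb"
  define K where "K = ES (diamond (diamond_index J))"
  have JK: "J \<subseteq> K" unfolding K_def by (rule subset_ES_diamond_index[OF J])
  have KE: "K \<subseteq> Edges" unfolding K_def by (rule ES_subset_Edges)
  have X: "prod_emb K (\<lambda>_. nnb) J (Pi\<^sub>E J A) \<in> sets (PiM K (\<lambda>_. nnb))"
    using J JK A by (intro sets_PiM_I) auto
  have emb: "prod_emb Edges (\<lambda>_. nnb) J (Pi\<^sub>E J A)
      = prod_emb Edges (\<lambda>_. nnb) K (prod_emb K (\<lambda>_. nnb) J (Pi\<^sub>E J A))"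
    using JK KE by simp
  have "emeasure P (prod_emb Edges (\<lambda>_. nnb) J (Pi\<^sub>E J A))
      = emeasure (PS p1 p2 p3 (diamond (diamond_index J))) (prod_emb K (\<lambda>_. nnb) J (Pi\<^sub>E J A))"
    unfolding emb using emeasure_distr_restrict[OF KE P(2) X] P(3)[OF hexdom_diamond]
    unfolding K_def by simp
  also have "\<dots> = emeasure Q (prod_emb Edges (\<lambda>_. nnb) J (Pi\<^sub>E J A))"
    unfolding emb using emeasure_distr_restrict[OF KE Q(1) X] Q(2)[OF hexdom_diamond]
    unfolding K_def by simp
  finally show "emeasure P (prod_emb Edges (\<lambda>_. nnb) J (Pi\<^sub>E J A))
      = emeasure Q (prod_emb Edges (\<lambda>_. nnb) J (Pi\<^sub>E J A))" .
qed

end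

section \<open>Translation invariance\<close>

lemma Ztil_shift_iff:
  assumes "a \<in> Ztil"
  shows "y + a \<in> Ztil \<longleftrightarrow> y \<in> Ztil"
proof -
  obtain a1 a2 y1 y2 where "a = (a1, a2)" "y = (y1, y2)" by (cases a, cases y)
  moreover have "even (a1 + a2)" using assms calculation(1) unfolding Ztil_def by simp
  then have "even (y1 + a1 + (y2 + a2)) \<longleftrightarrow> even (y1 + y2)" by presburger
  ultimately show ?thesis unfolding Ztil_def by simp
qed

lemma Edges_shift_iff: "a \<in> Ztil \<Longrightarrow> shift_edge a e \<in> Edges \<longleftrightarrow> e \<in> Edges"
  using Ztil_shift_iff[of a "fst e"] unfolding shift_edge_eq Edges_def Ztil_def
  by (cases e) (auto simp: prod_eq_iff)

lemma inj_shift_pt: "inj (\<lambda>y :: pt. y + a)"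
  by (rule injI) (simp add: prod_eq_iff)

lemma shift_image_iff:
  fixes a :: pt
  shows "y + a \<in> (\<lambda>y. y + a) ` S \<longleftrightarrow> y \<in> S"
  by (rule inj_image_mem_iff[OF inj_shift_pt])

lemma ES_shift_iff: "a \<in> Ztil \<Longrightarrow> shift_edge a e \<in> ES ((\<lambda>y. y + a) ` S) \<longleftrightarrow> e \<in> ES S"
  unfolding ES_def using Edges_shift_iff by (simp add: shift_edge_eq shift_image_iff)

lemma in_edges_shift_iff: "a \<in> Ztil \<Longrightarrow> shift_edge a e \<in> in_edges ((\<lambda>y. y + a) ` S) \<longleftrightarrow> e \<in> in_edges S"
  unfolding in_edges_def using Edges_shift_iff by (simp add: shift_edge_eq shift_image_iff)

lemma ascending_shift: "ascending (shift_edge a e) \<longleftrightarrow> ascending e"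
  unfolding ascending_def shift_edge_def by auto

lemma inj_shift_edge: "inj (shift_edge a)"
  by (rule injI) (simp add: shift_edge_eq prod_eq_iff)

definition shift_index :: "pt \<Rightarrow> edge + pt \<Rightarrow> edge + pt" where
  "shift_index a = map_sum (shift_edge a) (\<lambda>y. y + a)"

lemma shift_restrict_measurable:
  assumes "\<And>e. e \<in> J \<Longrightarrow> shift_edge a e \<in> K"
  shows "(\<lambda>\<omega>. \<lambda>e\<in>J. \<omega> (shift_edge a e)) \<in> measurable (PiM K (\<lambda>_. nnb)) (PiM J (\<lambda>_. nnb))"
  using assms by (intro measurable_restrict) simp

definition shift_noise :: "pt \<Rightarrow> pt set \<Rightarrow> (edge + pt \<Rightarrow> real) \<Rightarrow> edge + pt \<Rightarrow> real" where
  "shift_noise a S \<omega> = (\<lambda>i\<in>noise_index S. \<omega> (shift_index a i))"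

lemma shift_index_into:
  assumes "a \<in> Ztil"
  shows "shift_index a \<in> noise_index S \<rightarrow> noise_index ((\<lambda>y. y + a) ` S)"
  unfolding shift_index_def noise_index_def using in_edges_shift_iff[OF assms] by auto

lemma flow_map_shift:
  assumes "finite S" "S \<subseteq> Ztil" "a \<in> Ztil"
  shows "(\<lambda>e\<in>ES S. flow_map ((\<lambda>y. y + a) ` S) \<omega> (shift_edge a e)) = flow_map S (shift_noise a S \<omega>)"
proof (rule ext)
  fix e
  show "(\<lambda>e\<in>ES S. flow_map ((\<lambda>y. y + a) ` S) \<omega> (shift_edge a e)) e = flow_map S (shift_noise a S \<omega>) e"
  proof (cases "e \<in> ES S")
    case True
    then have "flow_map ((\<lambda>y. y + a) ` S) \<omega> (shift_edge a e)
        = flow S (\<lambda>e. \<omega> (Inl (shift_edge a e))) (\<lambda>y. \<omega> (Inr (y + a))) e"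
      unfolding flow_map_def using ES_shift_iff[OF assms(3)] flow_shift[OF assms(1,2) True] by simp
    also have "\<dots> = flow S (\<lambda>e. shift_noise a S \<omega> (Inl e)) (\<lambda>y. shift_noise a S \<omega> (Inr y)) e"
      by (rule flow_cong[OF assms(1,2) True])
        (auto simp: shift_noise_def noise_index_def shift_index_def)
    finally show ?thesis using True unfolding flow_map_def by simp
  qed (simp add: flow_map_def)
qed

context noise_laws
begin

lemma noise_law_shift_index: "M (shift_index a i) = M i"
  unfolding shift_index_def noise_law_def by (cases i) (simp_all add: ascending_shift)

lemma shift_noise_measurable:
  assumes "a \<in> Ztil"
  shows "shift_noise a S \<in> measurable (PiM (noise_index ((\<lambda>y. y + a) ` S)) M) (PiM (noise_index S) M)"
  unfolding shift_noise_def
proof (rule measurable_restrict)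
  fix i assume "i \<in> noise_index S"
  then have "shift_index a i \<in> noise_index ((\<lambda>y. y + a) ` S)" using shift_index_into[OF assms] by auto
  then show "(\<lambda>\<omega>. \<omega> (shift_index a i)) \<in> measurable (PiM (noise_index ((\<lambda>y. y + a) ` S)) M) (M i)"
    unfolding noise_law_shift_index[of a i, symmetric] by (rule measurable_component_singleton)
qed

lemma distr_shift_noise:
  assumes "a \<in> Ztil"
  shows "distr (PiM (noise_index ((\<lambda>y. y + a) ` S)) M) (PiM (noise_index S) M) (shift_noise a S)
       = PiM (noise_index S) M"
proof -
  have "inj_on (shift_index a) (noise_index S)"
    unfolding shift_index_def
    by (rule inj_on_subset[OF sum.inj_map[OF inj_shift_edge inj_shift_pt] subset_UNIV])
  from distr_PiM_reindex[where M = M, OF prob_space_M this shift_index_into[OF assms]]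
  show ?thesis unfolding shift_noise_def noise_law_shift_index .
qed

lemma PS_shift:
  assumes S: "finite S" "S \<subseteq> Ztil" and a: "a \<in> Ztil"
  shows "distr (PS p1 p2 p3 ((\<lambda>y. y + a) ` S)) (PiM (ES S) (\<lambda>_. nnb)) (\<lambda>\<omega>. \<lambda>e\<in>ES S. \<omega> (shift_edge a e))
       = PS p1 p2 p3 S"
proof -
  let ?Sa = "(\<lambda>y. y + a) ` S"
  have Sa: "finite ?Sa" "?Sa \<subseteq> Ztil" using S Ztil_shift_iff[OF a] by auto
  have shift_meas: "(\<lambda>\<omega>. \<lambda>e\<in>ES S. \<omega> (shift_edge a e)) \<in> measurable (PiM (ES ?Sa) (\<lambda>_. nnb)) (PiM (ES S) (\<lambda>_. nnb))"
    using ES_shift_iff[OF a] by (intro shift_restrict_measurable) simp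
  have "distr (PS p1 p2 p3 ?Sa) (PiM (ES S) (\<lambda>_. nnb)) (\<lambda>\<omega>. \<lambda>e\<in>ES S. \<omega> (shift_edge a e))
      = distr (PiM (noise_index ?Sa) M) (PiM (ES S) (\<lambda>_. nnb))
          ((\<lambda>\<omega>. \<lambda>e\<in>ES S. \<omega> (shift_edge a e)) \<circ> flow_map ?Sa)"
    unfolding PS_eq noise_eq by (rule distr_distr[OF shift_meas flow_map_measurable[OF Sa]])
  also have "\<dots> = distr (PiM (noise_index ?Sa) M) (PiM (ES S) (\<lambda>_. nnb)) (flow_map S \<circ> shift_noise a S)"
    by (rule distr_cong) (simp_all add: flow_map_shift[OF S a])
  also have "\<dots> = distr (distr (PiM (noise_index ?Sa) M) (PiM (noise_index S) M) (shift_noise a S))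
      (PiM (ES S) (\<lambda>_. nnb)) (flow_map S)"
    by (rule distr_distr[symmetric, OF flow_map_measurable[OF S] shift_noise_measurable[OF a]])
  also have "\<dots> = PS p1 p2 p3 S" unfolding distr_shift_noise[OF a] PS_eq noise_eq ..
  finally show ?thesis .
qed

lemma PS_extension_shift_invariant:
  assumes P: "prob_space P" "sets P = sets (PiM Edges (\<lambda>_. nnb))"
    "\<And>S. hexdom S \<Longrightarrow> distr P (PiM (ES S) (\<lambda>_. nnb)) (\<lambda>\<omega>. restrict \<omega> (ES S)) = PS p1 p2 p3 S"
    and a: "a \<in> Ztil"
  shows "distr P (PiM Edges (\<lambda>_. nnb)) (\<lambda>\<omega>. \<lambda>e\<in>Edges. \<omega> (shift_edge a e)) = P"
proof (rule PS_extension_unique[OF P, symmetric])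
  let ?sh = "\<lambda>\<omega>. \<lambda>e\<in>Edges. \<omega> (shift_edge a e)"
  have measurable_P: "measurable P X = measurable (PiM Edges (\<lambda>_. nnb)) X" for X :: "'z measure"
    by (rule measurable_cong_sets[OF P(2) refl])
  have sh: "?sh \<in> measurable P (PiM Edges (\<lambda>_. nnb))"
    unfolding measurable_P using Edges_shift_iff[OF a] by (intro shift_restrict_measurable) simp
  fix S assume S: "hexdom S"
  let ?Sa = "(\<lambda>y. y + a) ` S"
  have "distr (distr P (PiM Edges (\<lambda>_. nnb)) ?sh) (PiM (ES S) (\<lambda>_. nnb)) (\<lambda>\<omega>. restrict \<omega> (ES S))
      = distr P (PiM (ES S) (\<lambda>_. nnb)) ((\<lambda>\<omega>. restrict \<omega> (ES S)) \<circ> ?sh)"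
    by (rule distr_distr[OF measurable_restrict_subset[OF ES_subset_Edges] sh])
  also have "\<dots> = distr P (PiM (ES S) (\<lambda>_. nnb))
      ((\<lambda>\<omega>. \<lambda>e\<in>ES S. \<omega> (shift_edge a e)) \<circ> (\<lambda>\<omega>. restrict \<omega> (ES ?Sa)))"
    using ES_subset_Edges ES_shift_iff[OF a] by (intro distr_cong) (auto simp: fun_eq_iff)
  also have "\<dots> = distr (distr P (PiM (ES ?Sa) (\<lambda>_. nnb)) (\<lambda>\<omega>. restrict \<omega> (ES ?Sa)))
      (PiM (ES S) (\<lambda>_. nnb)) (\<lambda>\<omega>. \<lambda>e\<in>ES S. \<omega> (shift_edge a e))"
    using ES_shift_iff[OF a]
    by (intro distr_distr[symmetric] shift_restrict_measurable)
      (simp_all add: measurable_P measurable_restrict_subset[OF ES_subset_Edges])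
  also have "\<dots> = PS p1 p2 p3 S"
    unfolding P(3)[OF hexdom_shift[OF S a]]
    by (rule PS_shift[OF hexdom_finite[OF S] hexdom_subset_Ztil[OF S] a])
  finally show "distr (distr P (PiM Edges (\<lambda>_. nnb)) ?sh) (PiM (ES S) (\<lambda>_. nnb))
      (\<lambda>\<omega>. restrict \<omega> (ES S)) = PS p1 p2 p3 S" .
qed simp_all

end

theorem mainTheorem2:
  fixes p1 p2 p3 :: "real measure"
  assumes "prob_space p1" "prob_space p2" "prob_space p3"
    and "sets p1 = sets nnb" "sets p2 = sets nnb" "sets p3 = sets nnb"
    and "distr (p1 \<Otimes>\<^sub>M (p2 \<Otimes>\<^sub>M p3)) (p1 \<Otimes>\<^sub>M (p2 \<Otimes>\<^sub>M p3)) R3 = p1 \<Otimes>\<^sub>M (p2 \<Otimes>\<^sub>M p3)"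
  shows "(\<forall>S' S''. hexdom S' \<longrightarrow> hexdom S'' \<longrightarrow> S' \<subseteq> S'' \<longrightarrow>
            distr (PS p1 p2 p3 S'') (PiM (ES S') (\<lambda>_. nnb)) (\<lambda>\<omega>. restrict \<omega> (ES S')) = PS p1 p2 p3 S')
       \<and> (\<exists>!P. prob_space P \<and> sets P = sets (PiM Edges (\<lambda>_. nnb)) \<and>
            (\<forall>S. hexdom S \<longrightarrow> distr P (PiM (ES S) (\<lambda>_. nnb)) (\<lambda>\<omega>. restrict \<omega> (ES S)) = PS p1 p2 p3 S))
       \<and> (\<forall>P. prob_space P \<and> sets P = sets (PiM Edges (\<lambda>_. nnb)) \<and>
            (\<forall>S. hexdom S \<longrightarrow> distr P (PiM (ES S) (\<lambda>_. nnb)) (\<lambda>\<omega>. restrict \<omega> (ES S)) = PS p1 p2 p3 S)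
          \<longrightarrow> (\<forall>a\<in>Ztil. distr P (PiM Edges (\<lambda>_. nnb)) (\<lambda>\<omega>. \<lambda>e\<in>Edges. \<omega> (shift_edge a e)) = P))"
proof -
  interpret stationary_laws p1 p2 p3
    by (simp add: stationary_laws_def stationary_laws_axioms_def noise_laws_def assms)
  obtain P where P: "prob_space P" "sets P = sets (PiM Edges (\<lambda>_. nnb))"
    "\<forall>S. hexdom S \<longrightarrow> distr P (PiM (ES S) (\<lambda>_. nnb)) (\<lambda>\<omega>. restrict \<omega> (ES S)) = PS p1 p2 p3 S"
    using PS_extension_exists by blast
  then have unique: "\<exists>!P. prob_space P \<and> sets P = sets (PiM Edges (\<lambda>_. nnb)) \<and>
      (\<forall>S. hexdom S \<longrightarrow> distr P (PiM (ES S) (\<lambda>_. nnb)) (\<lambda>\<omega>. restrict \<omega> (ES S)) = PS p1 p2 p3 S)"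
    by (intro ex1I[of _ P]) (auto intro: PS_extension_unique[symmetric])
  show ?thesis
  proof (intro conjI allI impI ballI)
    fix S' S'' assume "hexdom S'" "hexdom S''" "S' \<subseteq> S''"
    then show "distr (PS p1 p2 p3 S'') (PiM (ES S') (\<lambda>_. nnb)) (\<lambda>\<omega>. restrict \<omega> (ES S'))
        = PS p1 p2 p3 S'"
      by (rule PS_consistent)
  next
    fix Q a assume "prob_space Q \<and> sets Q = sets (PiM Edges (\<lambda>_. nnb)) \<and>
      (\<forall>S. hexdom S \<longrightarrow> distr Q (PiM (ES S) (\<lambda>_. nnb)) (\<lambda>\<omega>. restrict \<omega> (ES S)) = PS p1 p2 p3 S)"
      and "a \<in> Ztil"
    then show "distr Q (PiM Edges (\<lambda>_. nnb)) (\<lambda>\<omega>. \<lambda>e\<in>Edges. \<omega> (shift_edge a e)) = Q"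
      using PS_extension_shift_invariant by blast
  qed (fact unique)
qed

end
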